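(* Every second-order formula is equivalent (on all finite structures) to an $\mathrm{SO}\text{-}\mathrm{KROM}^r$ formula. More precisely, for each $k\ge1$: if $k$ is even then $\Sigma^1_k\le\Sigma^1_{k+1}\text{-}\mathrm{KROM}^r$, and if $k$ is odd then $\Pi^1_k\le\Pi^1_{k+1}\text{-}\mathrm{KROM}^r$.
   Context: All structures are finite; every vocabulary contains equality. $\Sigma^1_k$ (resp. $\Pi^1_k$) is the class of second-order formulas consisting of a prefix of second-order quantifiers starting with $\exists$ (resp. $\forall$) with $k-1$ alternations between existential and universal blocks, followed by a first-order formula. For a vocabulary $\tau$, an SO-KROM$^r(\tau)$ formula is a second-order formula $Q_1R_1\cdots Q_mR_m\forall\bar{x}(C_1\wedge\cdots\wedge C_n)$, where each $Q_i\in\{\forall,\exists\}$, $R_i$ are second-order relation variables, and each clause $C_j$ is a disjunction $\beta_1\vee\cdots\vee\beta_q\vee H_1\vee H_2$ in which each $\beta_s$ is an atomic or negated atomic $\tau$-formula, and each $H_t$ is one of $R_i\bar{z}$, $\neg R_i\bar{z}$, $\exists z_1\cdots\exists z_{r}R_i z_1\dots z_r$ ($r$ the arity of $R_i$), or $\bot$. $\Sigma^1_k\text{-}\mathrm{KROM}^r$ (resp. $\Pi^1_k\text{-}\mathrm{KROM}^r$) is the set of SO-KROM$^r$ formulas whose second-order prefix starts with an existential (resp. universal) quantifier and has exactly $k-1$ alternations. $\mathcal{L}_1\le\mathcal{L}_2$ means every $\mathcal{L}_1$ formula is equivalent to some $\mathcal{L}_2$ formula over the same vocabulary. *)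

theory Defs
  imports Main
begin

text \<open>Relation symbols of a vocabulary and second-order relation variables are
  pairs (name, arity).
  A vocabulary is a set of relation symbols; equality is always available.\<close>

type_synonym rsym = "nat \<times> nat"
type_synonym svar = "nat \<times> nat"

text \<open>First-order formulas over a vocabulary, possibly containing atoms of
  second-order relation variables (the matrix of a prenex SO formula).\<close>
datatype fo =
    FEq nat nat
  | FRel rsym "nat list"
  | FSV svar "nat list"
  | FNot fo
  | FAnd fo fo
  | FOr fo fo
  | FEx nat fo
  | FAll nat fo

text \<open>Prenex second-order formula: a list of second-order quantifiers
  (True = existential, False = universal) followed by a first-order formula.\<close>
datatype soform = SO "(bool \<times> svar) list" fo

text \<open>Literals \<beta> of a Krom clause: (negated) atomic \<tau>-formulas (including equality).\<close>
datatype lit = LEq bool nat nat | LRel bool rsym "nat list"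

text \<open>The special disjuncts H: R z, \<not>R z, \<exists>z1..zr. R z1..zr (r = arity of R), or \<bottom>.\<close>
datatype hlit = HPos svar "nat list" | HNeg svar "nat list" | HNonempty svar | HBot

text \<open>A clause \<beta>1 \<or> ... \<or> \<beta>q \<or> H1 \<or> H2.\<close>
type_synonym clause = "lit list \<times> hlit \<times> hlit"

text \<open>SO-KROM formula  Q1 R1 ... Qm Rm \<forall>x1..xl (C1 \<and> ... \<and> Cn).\<close>
datatype krom = KROM "(bool \<times> svar) list" "nat list" "clause list"

fun fv :: "fo \<Rightarrow> nat set" where
  "fv (FEq x y) = {x, y}"
| "fv (FRel R xs) = set xs"
| "fv (FSV X xs) = set xs"
| "fv (FNot p) = fv p"
| "fv (FAnd p q) = fv p \<union> fv q"
| "fv (FOr p q) = fv p \<union> fv q"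
| "fv (FEx x p) = fv p - {x}"
| "fv (FAll x p) = fv p - {x}"

fun wf_fo :: "rsym set \<Rightarrow> svar set \<Rightarrow> fo \<Rightarrow> bool" where
  "wf_fo \<tau> V (FEq x y) = True"
| "wf_fo \<tau> V (FRel R xs) = (R \<in> \<tau> \<and> length xs = snd R)"
| "wf_fo \<tau> V (FSV X xs) = (X \<in> V \<and> length xs = snd X)"
| "wf_fo \<tau> V (FNot p) = wf_fo \<tau> V p"
| "wf_fo \<tau> V (FAnd p q) = (wf_fo \<tau> V p \<and> wf_fo \<tau> V q)"
| "wf_fo \<tau> V (FOr p q) = (wf_fo \<tau> V p \<and> wf_fo \<tau> V q)"
| "wf_fo \<tau> V (FEx x p) = wf_fo \<tau> V p"
| "wf_fo \<tau> V (FAll x p) = wf_fo \<tau> V p"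

fun wf_lit :: "rsym set \<Rightarrow> nat set \<Rightarrow> lit \<Rightarrow> bool" where
  "wf_lit \<tau> W (LEq b x y) = (x \<in> W \<and> y \<in> W)"
| "wf_lit \<tau> W (LRel b R xs) = (R \<in> \<tau> \<and> length xs = snd R \<and> set xs \<subseteq> W)"

fun wf_hlit :: "svar set \<Rightarrow> nat set \<Rightarrow> hlit \<Rightarrow> bool" where
  "wf_hlit V W (HPos X xs) = (X \<in> V \<and> length xs = snd X \<and> set xs \<subseteq> W)"
| "wf_hlit V W (HNeg X xs) = (X \<in> V \<and> length xs = snd X \<and> set xs \<subseteq> W)"
| "wf_hlit V W (HNonempty X) = (X \<in> V)"
| "wf_hlit V W HBot = True"

definition wf_clause :: "rsym set \<Rightarrow> svar set \<Rightarrow> nat set \<Rightarrow> clause \<Rightarrow> bool" where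
  "wf_clause \<tau> V W c = (case c of (bs, h1, h2) \<Rightarrow>
      (\<forall>b \<in> set bs. wf_lit \<tau> W b) \<and> wf_hlit V W h1 \<and> wf_hlit V W h2)"

definition nblocks :: "(bool \<times> svar) list \<Rightarrow> nat" where
  "nblocks qs = length (remdups_adj (map fst qs))"

definition prefix_class :: "bool \<Rightarrow> nat \<Rightarrow> (bool \<times> svar) list \<Rightarrow> bool" where
  "prefix_class b k qs \<longleftrightarrow> qs \<noteq> [] \<and> fst (hd qs) = b \<and> nblocks qs = k"

definition SO_class :: "bool \<Rightarrow> nat \<Rightarrow> rsym set \<Rightarrow> soform set" where
  "SO_class b k \<tau> = {SO qs p | qs p. prefix_class b k qs
       \<and> wf_fo \<tau> (snd ` set qs) p \<and> fv p = {}}"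

definition Sigma1 :: "nat \<Rightarrow> rsym set \<Rightarrow> soform set" where
  "Sigma1 k = SO_class True k"

definition Pi1 :: "nat \<Rightarrow> rsym set \<Rightarrow> soform set" where
  "Pi1 k = SO_class False k"

definition KROM_class :: "bool \<Rightarrow> nat \<Rightarrow> rsym set \<Rightarrow> krom set" where
  "KROM_class b k \<tau> = {KROM qs xs cs | qs xs cs. prefix_class b k qs
       \<and> distinct (map snd qs)
       \<and> (\<forall>c \<in> set cs. wf_clause \<tau> (snd ` set qs) (set xs) c)}"

definition Sigma1_KROM :: "nat \<Rightarrow> rsym set \<Rightarrow> krom set" where
  "Sigma1_KROM k = KROM_class True k"

definition Pi1_KROM :: "nat \<Rightarrow> rsym set \<Rightarrow> krom set" where
  "Pi1_KROM k = KROM_class False k"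

definition is_structure :: "rsym set \<Rightarrow> 'a set \<Rightarrow> (rsym \<Rightarrow> 'a list \<Rightarrow> bool) \<Rightarrow> bool" where
  "is_structure \<tau> A I \<longleftrightarrow> finite A \<and> A \<noteq> {} \<and>
     (\<forall>R ts. I R ts \<longrightarrow> R \<in> \<tau> \<and> length ts = snd R \<and> set ts \<subseteq> A)"

definition rel_on :: "'a set \<Rightarrow> nat \<Rightarrow> ('a list \<Rightarrow> bool) \<Rightarrow> bool" where
  "rel_on A n P \<longleftrightarrow> (\<forall>ts. P ts \<longrightarrow> length ts = n \<and> set ts \<subseteq> A)"

fun fo_sat :: "'a set \<Rightarrow> (rsym \<Rightarrow> 'a list \<Rightarrow> bool) \<Rightarrow> (svar \<Rightarrow> 'a list \<Rightarrow> bool)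
                 \<Rightarrow> (nat \<Rightarrow> 'a) \<Rightarrow> fo \<Rightarrow> bool" where
  "fo_sat A I S v (FEq x y) = (v x = v y)"
| "fo_sat A I S v (FRel R xs) = I R (map v xs)"
| "fo_sat A I S v (FSV X xs) = S X (map v xs)"
| "fo_sat A I S v (FNot p) = (\<not> fo_sat A I S v p)"
| "fo_sat A I S v (FAnd p q) = (fo_sat A I S v p \<and> fo_sat A I S v q)"
| "fo_sat A I S v (FOr p q) = (fo_sat A I S v p \<or> fo_sat A I S v q)"
| "fo_sat A I S v (FEx x p) = (\<exists>a \<in> A. fo_sat A I S (v(x := a)) p)"
| "fo_sat A I S v (FAll x p) = (\<forall>a \<in> A. fo_sat A I S (v(x := a)) p)"

fun q_sat :: "'a set \<Rightarrow> (bool \<times> svar) list \<Rightarrow> ((svar \<Rightarrow> 'a list \<Rightarrow> bool) \<Rightarrow> bool)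
                \<Rightarrow> (svar \<Rightarrow> 'a list \<Rightarrow> bool) \<Rightarrow> bool" where
  "q_sat A [] body S = body S"
| "q_sat A ((True, X) # qs) body S =
     (\<exists>P. rel_on A (snd X) P \<and> q_sat A qs body (S(X := P)))"
| "q_sat A ((False, X) # qs) body S =
     (\<forall>P. rel_on A (snd X) P \<longrightarrow> q_sat A qs body (S(X := P)))"

fun lit_sat :: "(rsym \<Rightarrow> 'a list \<Rightarrow> bool) \<Rightarrow> (nat \<Rightarrow> 'a) \<Rightarrow> lit \<Rightarrow> bool" where
  "lit_sat I v (LEq b x y) = (if b then v x = v y else v x \<noteq> v y)"
| "lit_sat I v (LRel b R xs) = (if b then I R (map v xs) else \<not> I R (map v xs))"

fun hlit_sat :: "'a set \<Rightarrow> (svar \<Rightarrow> 'a list \<Rightarrow> bool) \<Rightarrow> (nat \<Rightarrow> 'a) \<Rightarrow> hlit \<Rightarrow> bool" where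
  "hlit_sat A S v (HPos X xs) = S X (map v xs)"
| "hlit_sat A S v (HNeg X xs) = (\<not> S X (map v xs))"
| "hlit_sat A S v (HNonempty X) = (\<exists>ts. length ts = snd X \<and> set ts \<subseteq> A \<and> S X ts)"
| "hlit_sat A S v HBot = False"

definition clause_sat :: "'a set \<Rightarrow> (rsym \<Rightarrow> 'a list \<Rightarrow> bool) \<Rightarrow> (svar \<Rightarrow> 'a list \<Rightarrow> bool)
                            \<Rightarrow> (nat \<Rightarrow> 'a) \<Rightarrow> clause \<Rightarrow> bool" where
  "clause_sat A I S v c = (case c of (bs, h1, h2) \<Rightarrow>
      (\<exists>b \<in> set bs. lit_sat I v b) \<or> hlit_sat A S v h1 \<or> hlit_sat A S v h2)"

text \<open>Truth of sentences in a structure (variable assignments are irrelevant for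
  sentences; we start from an arbitrary assignment into A and the empty SO assignment).\<close>
definition so_models :: "'a set \<Rightarrow> (rsym \<Rightarrow> 'a list \<Rightarrow> bool) \<Rightarrow> soform \<Rightarrow> bool" where
  "so_models A I f = (case f of SO qs p \<Rightarrow>
      q_sat A qs (\<lambda>S. fo_sat A I S (\<lambda>_. SOME a. a \<in> A) p) (\<lambda>_ _. False))"

definition krom_models :: "'a set \<Rightarrow> (rsym \<Rightarrow> 'a list \<Rightarrow> bool) \<Rightarrow> krom \<Rightarrow> bool" where
  "krom_models A I f = (case f of KROM qs xs cs \<Rightarrow>
      q_sat A qs (\<lambda>S. \<forall>w. (\<forall>x. x \<notin> set xs \<longrightarrow> w x = (SOME a. a \<in> A))
                          \<and> (\<forall>x \<in> set xs. w x \<in> A)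
                          \<longrightarrow> (\<forall>c \<in> set cs. clause_sat A I S w c))
        (\<lambda>_ _. False))"

text \<open>Equivalence over all finite \<tau>-structures. Every finite structure is isomorphic
  to one whose universe is a finite set of natural numbers, so universes are taken
  to be subsets of nat.\<close>
definition equivalent :: "rsym set \<Rightarrow> soform \<Rightarrow> krom \<Rightarrow> bool" where
  "equivalent \<tau> f g \<longleftrightarrow>
     (\<forall>(A :: nat set) I. is_structure \<tau> A I \<longrightarrow> (so_models A I f \<longleftrightarrow> krom_models A I g))"

definition class_le :: "(rsym set \<Rightarrow> soform set) \<Rightarrow> (rsym set \<Rightarrow> krom set) \<Rightarrow> bool" where
  "class_le L1 L2 \<longleftrightarrow> (\<forall>\<tau>. \<forall>f \<in> L1 \<tau>. \<exists>g \<in> L2 \<tau>. equivalent \<tau> f g)"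

end

theory Submission
  imports Defs
begin

text \<open>Shadowed second-order variables are first renamed apart.  The prefix of a formula in the
  given class ends with a universal block, to which we add universally quantified Tseitin
  relations, one for each subformula occurrence of the first-order matrix: the sentence holds iff,
  for every choice of these relations, some gate equation (relation \<longleftrightarrow> connective applied to
  the relations of the children) fails or the relation of the root is nonempty.  Each of these
  alternatives is an \<exists>\<forall> statement about a conjunction of literals (a check), and a new existential
  block of relations, read as a multiplexer along the list of checks, expresses their
  disjunction by Krom clauses.  The multiplexer needs two distinct elements.  On one-element
  structures the sentence only depends on the truth pattern of its relation symbols; each bad
  pattern is excluded by a clause that is switched off by a nonempty binary relation D, and D may
  only contain pairs of distinct elements.\<close>

lemma q_sat_append: "q_sat A (qs @ qs') body S = q_sat A qs (q_sat A qs' body) S"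
proof (induction qs arbitrary: S)
  case (Cons q qs)
  obtain b X where "q = (b, X)" by (cases q) auto
  then show ?case by (cases b) (simp_all only: append_Cons q_sat.simps Cons.IH)
qed simp

lemma q_sat_const: "q_sat A qs (\<lambda>_. c) S = c"
proof (induction qs arbitrary: S)
  case (Cons q qs)
  obtain b X where "q = (b, X)" by (cases q) auto
  moreover have "rel_on A (snd X) (\<lambda>_. False)" by (simp add: rel_on_def)
  ultimately show ?case using Cons by (cases b) auto
qed simp

definition reassigns :: "'a set \<Rightarrow> svar list \<Rightarrow> (svar \<Rightarrow> 'a list \<Rightarrow> bool) \<Rightarrow> (svar \<Rightarrow> 'a list \<Rightarrow> bool) \<Rightarrow> bool" where
  "reassigns A Xs S S' \<longleftrightarrow> (\<forall>X. X \<notin> set Xs \<longrightarrow> S' X = S X) \<and> (\<forall>X\<in>set Xs. rel_on A (snd X) (S' X))"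

lemma reassigns_Nil: "reassigns A [] S S' \<longleftrightarrow> S' = S"
  by (auto simp: reassigns_def)

lemma reassigns_Cons:
  assumes "X \<notin> set Xs"
  shows "reassigns A (X # Xs) S S' \<longleftrightarrow> rel_on A (snd X) (S' X) \<and> reassigns A Xs (S(X := S' X)) S'"
  using assms unfolding reassigns_def by auto

lemma reassigns_exists: "\<exists>S'. reassigns A Xs S S'"
  by (rule exI[of _ "\<lambda>X. if X \<in> set Xs then (\<lambda>_. False) else S X"]) (simp add: reassigns_def rel_on_def)

lemma reassigns_upd_same: "X \<notin> set Xs \<Longrightarrow> reassigns A Xs (S(X := P)) S' \<Longrightarrow> S' X = P"
  unfolding reassigns_def by (metis fun_upd_same)

lemma q_sat_forall_block:
  "distinct Xs \<Longrightarrow> q_sat A (map (Pair False) Xs) body S \<longleftrightarrow> (\<forall>S'. reassigns A Xs S S' \<longrightarrow> body S')"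
proof (induction Xs arbitrary: S)
  case (Cons X Xs)
  then have "q_sat A (map (Pair False) (X # Xs)) body S \<longleftrightarrow>
      (\<forall>P S'. rel_on A (snd X) P \<longrightarrow> reassigns A Xs (S(X := P)) S' \<longrightarrow> body S')"
    by simp
  also have "\<dots> \<longleftrightarrow> (\<forall>S'. reassigns A (X # Xs) S S' \<longrightarrow> body S')"
    using Cons.prems reassigns_upd_same[of X Xs A S] by (simp add: reassigns_Cons) metis
  finally show ?case .
qed (simp add: reassigns_Nil)

lemma q_sat_exists_block:
  "distinct Xs \<Longrightarrow> q_sat A (map (Pair True) Xs) body S \<longleftrightarrow> (\<exists>S'. reassigns A Xs S S' \<and> body S')"
proof (induction Xs arbitrary: S)
  case (Cons X Xs)
  then have "q_sat A (map (Pair True) (X # Xs)) body S \<longleftrightarrow>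
      (\<exists>P S'. rel_on A (snd X) P \<and> reassigns A Xs (S(X := P)) S' \<and> body S')"
    by simp
  also have "\<dots> \<longleftrightarrow> (\<exists>S'. reassigns A (X # Xs) S S' \<and> body S')"
    using Cons.prems reassigns_upd_same[of X Xs A S] by (simp add: reassigns_Cons) metis
  finally show ?case .
qed (simp add: reassigns_Nil)

fun rename_shadowed :: "nat \<Rightarrow> (bool \<times> svar) list \<Rightarrow> (bool \<times> svar) list" where
  "rename_shadowed M [] = []"
| "rename_shadowed M ((b, X) # qs) =
     (b, if X \<in> snd ` set qs then (M + length qs, snd X) else X) # rename_shadowed M qs"

lemma map_fst_rename_shadowed: "map fst (rename_shadowed M qs) = map fst qs"
  by (induction M qs rule: rename_shadowed.induct) auto

lemma rename_shadowed_keeps: "X \<in> snd ` set qs \<Longrightarrow> X \<in> snd ` set (rename_shadowed M qs)"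
  by (induction M qs rule: rename_shadowed.induct) (auto split: if_splits)

lemma rename_shadowed_names:
  "Y \<in> snd ` set (rename_shadowed M qs) \<Longrightarrow> Y \<in> snd ` set qs \<or> M \<le> fst Y \<and> fst Y < M + length qs"
proof (induction M qs rule: rename_shadowed.induct)
  case (2 M b X qs)
  then have "Y = (M + length qs, snd X) \<or> Y = X \<or> Y \<in> snd ` set (rename_shadowed M qs)"
    by (auto split: if_splits)
  with 2 show ?case by fastforce
qed simp

lemma distinct_rename_shadowed:
  "\<forall>Y\<in>snd ` set qs. fst Y < M \<Longrightarrow> distinct (map snd (rename_shadowed M qs))"
proof (induction M qs rule: rename_shadowed.induct)
  case (2 M b X qs)
  have "(M + length qs, snd X) \<notin> snd ` set (rename_shadowed M qs)"
    using rename_shadowed_names[of "(M + length qs, snd X)" M qs] 2(2) by fastforce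
  moreover have "X \<notin> snd ` set qs \<Longrightarrow> X \<notin> snd ` set (rename_shadowed M qs)"
    using rename_shadowed_names[of X M qs] 2(2) by fastforce
  ultimately show ?case using 2 by (auto simp: image_iff)
qed simp

text \<open>Only the innermost quantification of a variable is visible in the body, so renaming
  the shadowed outer ones to fresh names does not change the meaning.\<close>
lemma q_sat_rename_shadowed:
  assumes "\<forall>X\<in>W. fst X < M"
    and "\<And>S S'. \<forall>X\<in>W. S X = S' X \<Longrightarrow> body S = body S'"
    and "\<forall>X\<in>W - snd ` set qs. S X = S' X"
  shows "q_sat A (rename_shadowed M qs) body S' = q_sat A qs body S"
  using assms(3)
proof (induction qs arbitrary: S S')
  case Nil
  then show ?case using assms(2) by simp
next
  case (Cons q qs)
  obtain b X where q: "q = (b, X)" by (cases q) auto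
  define X' where "X' = (if X \<in> snd ` set qs then (M + length qs, snd X) else X)"
  have "q_sat A (rename_shadowed M qs) body (S'(X' := P)) = q_sat A qs body (S(X := P))" for P
  proof (rule Cons.IH, intro ballI)
    fix Y assume Y: "Y \<in> W - snd ` set qs"
    show "(S(X := P)) Y = (S'(X' := P)) Y"
    proof (cases "X \<in> snd ` set qs")
      case True
      have "fst Y < M" using Y assms(1) by blast
      with True Y have "Y \<noteq> X" "Y \<noteq> X'" unfolding X'_def by auto
      with Y Cons.prems show ?thesis unfolding q by simp
    next
      case False
      with Y Cons.prems show ?thesis unfolding X'_def q by simp
    qed
  qed
  then show ?case unfolding X'_def q by (cases b) simp_all
qed

lemma last_by_alternations:
  "xs \<noteq> [] \<Longrightarrow> last (xs :: bool list) = (if odd (length (remdups_adj xs)) then hd xs else \<not> hd xs)"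
  by (induction xs rule: remdups_adj.induct) auto

lemma remdups_adj_append_blocks:
  assumes "xs \<noteq> []" "last xs = False" "g > 0"
  shows "remdups_adj (xs @ replicate v False @ replicate g True) = remdups_adj xs @ [True]"
proof -
  have "dropWhile (\<lambda>y. y = False) (replicate v False @ replicate g True) = replicate g True"
    using assms(3) by (induction v) (auto simp: dropWhile_append2)
  then show ?thesis using assms by (simp add: remdups_adj_append'' remdups_adj_replicate)
qed

fun vars :: "fo \<Rightarrow> nat set" where
  "vars (FEq x y) = {x, y}"
| "vars (FRel R xs) = set xs"
| "vars (FSV X xs) = set xs"
| "vars (FNot p) = vars p"
| "vars (FAnd p q) = vars p \<union> vars q"
| "vars (FOr p q) = vars p \<union> vars q"
| "vars (FEx x p) = insert x (vars p)"
| "vars (FAll x p) = insert x (vars p)"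

fun so_vars :: "fo \<Rightarrow> svar set" where
  "so_vars (FSV X xs) = {X}"
| "so_vars (FNot p) = so_vars p"
| "so_vars (FAnd p q) = so_vars p \<union> so_vars q"
| "so_vars (FOr p q) = so_vars p \<union> so_vars q"
| "so_vars (FEx x p) = so_vars p"
| "so_vars (FAll x p) = so_vars p"
| "so_vars _ = {}"

lemma finite_vars: "finite (vars p)"
  by (induction p) auto

lemma fv_subset_vars: "fv p \<subseteq> vars p"
  by (induction p) auto

lemma so_vars_wf: "wf_fo \<tau> V p \<Longrightarrow> so_vars p \<subseteq> V"
  by (induction p) auto

lemma fo_sat_cong_fv: "\<forall>x\<in>fv p. v x = v' x \<Longrightarrow> fo_sat A I S v p = fo_sat A I S v' p"
proof (induction p arbitrary: v v')
  case (FEx x p)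
  then have "fo_sat A I S (v(x := a)) p = fo_sat A I S (v'(x := a)) p" for a
    by (intro FEx.IH) auto
  then show ?case by simp
next
  case (FAll x p)
  then have "fo_sat A I S (v(x := a)) p = fo_sat A I S (v'(x := a)) p" for a
    by (intro FAll.IH) auto
  then show ?case by simp
qed (simp_all cong: map_cong, blast+)

lemma fo_sat_cong_so_vars: "\<forall>X\<in>so_vars p. S X = S' X \<Longrightarrow> fo_sat A I S v p = fo_sat A I S' v p"
  by (induction p arbitrary: v) auto

fun or_all_free :: "fo \<Rightarrow> bool" where
  "or_all_free (FNot p) = or_all_free p"
| "or_all_free (FAnd p q) = (or_all_free p \<and> or_all_free q)"
| "or_all_free (FOr p q) = False"
| "or_all_free (FEx x p) = or_all_free p"
| "or_all_free (FAll x p) = False"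
| "or_all_free _ = True"

fun elim_or_all :: "fo \<Rightarrow> fo" where
  "elim_or_all (FNot p) = FNot (elim_or_all p)"
| "elim_or_all (FAnd p q) = FAnd (elim_or_all p) (elim_or_all q)"
| "elim_or_all (FOr p q) = FNot (FAnd (FNot (elim_or_all p)) (FNot (elim_or_all q)))"
| "elim_or_all (FEx x p) = FEx x (elim_or_all p)"
| "elim_or_all (FAll x p) = FNot (FEx x (FNot (elim_or_all p)))"
| "elim_or_all p = p"

lemma or_all_free_elim_or_all: "or_all_free (elim_or_all p)"
  by (induction p) auto

lemma fo_sat_elim_or_all: "fo_sat A I S v (elim_or_all p) = fo_sat A I S v p"
  by (induction p arbitrary: v) auto

lemma vars_elim_or_all: "vars (elim_or_all p) = vars p"
  by (induction p) auto

lemma so_vars_elim_or_all: "so_vars (elim_or_all p) = so_vars p"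
  by (induction p) auto

lemma wf_fo_elim_or_all: "wf_fo \<tau> V (elim_or_all p) = wf_fo \<tau> V p"
  by (induction p) auto

section \<open>Checks and Tseitin gates\<close>

datatype item = ILit lit | ISV bool svar "nat list"

fun item_sat :: "(rsym \<Rightarrow> 'a list \<Rightarrow> bool) \<Rightarrow> (svar \<Rightarrow> 'a list \<Rightarrow> bool) \<Rightarrow> (nat \<Rightarrow> 'a) \<Rightarrow> item \<Rightarrow> bool" where
  "item_sat I S w (ILit l) = lit_sat I w l"
| "item_sat I S w (ISV b X xs) = (S X (map w xs) = b)"

fun item_vars :: "item \<Rightarrow> nat set" where
  "item_vars (ILit (LEq b x y)) = {x, y}"
| "item_vars (ILit (LRel b R xs)) = set xs"
| "item_vars (ISV b X xs) = set xs"

fun item_svars :: "item \<Rightarrow> svar set" where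
  "item_svars (ILit l) = {}"
| "item_svars (ISV b X xs) = {X}"

lemma item_sat_cong:
  assumes "\<forall>x\<in>item_vars it. w x = w' x" "\<forall>X\<in>item_svars it. S X = S' X"
  shows "item_sat I S w it = item_sat I S' w' it"
  using assms by (cases it rule: item_vars.cases) (auto cong: map_cong)

text \<open>A check is a conjunction of items, read as  \<exists>w \<forall>z. \<dots>  with z the value of the
  variable u; a list of checks stands for their disjunction.\<close>
definition check_holds :: "'a set \<Rightarrow> (rsym \<Rightarrow> 'a list \<Rightarrow> bool) \<Rightarrow> (svar \<Rightarrow> 'a list \<Rightarrow> bool)
    \<Rightarrow> nat \<Rightarrow> item list \<Rightarrow> bool" where
  "check_holds A I S u c \<longleftrightarrow> (\<exists>w. (\<forall>i. w i \<in> A) \<and> (\<forall>z\<in>A. \<forall>it\<in>set c. item_sat I S (w(u := z)) it))"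

definition checks_fail :: "'a set \<Rightarrow> (rsym \<Rightarrow> 'a list \<Rightarrow> bool) \<Rightarrow> (svar \<Rightarrow> 'a list \<Rightarrow> bool)
    \<Rightarrow> nat \<Rightarrow> item list list \<Rightarrow> bool" where
  "checks_fail A I S u cs \<longleftrightarrow> (\<forall>c\<in>set cs. \<not> check_holds A I S u c)"

lemma check_holds_cong:
  "\<forall>it\<in>set c. \<forall>X\<in>item_svars it. S X = S' X \<Longrightarrow> check_holds A I S u c = check_holds A I S' u c"
  unfolding check_holds_def using item_sat_cong by metis

lemma checks_fail_append: "checks_fail A I S u (cs @ ds) \<longleftrightarrow> checks_fail A I S u cs \<and> checks_fail A I S u ds"
  by (auto simp: checks_fail_def)

lemma check_holds_without_u:
  assumes "\<forall>it\<in>set c. u \<notin> item_vars it"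
  shows "check_holds A I S u c \<longleftrightarrow> (\<exists>w. (\<forall>i. w i \<in> A) \<and> (\<forall>it\<in>set c. item_sat I S w it))"
proof -
  have upd: "item_sat I S (w(u := z)) it = item_sat I S w it" if "it \<in> set c" for w z it
    using assms that by (intro item_sat_cong) auto
  show ?thesis
  proof
    assume "check_holds A I S u c"
    then obtain w where w: "\<forall>i. w i \<in> A" "\<forall>z\<in>A. \<forall>it\<in>set c. item_sat I S (w(u := z)) it"
      unfolding check_holds_def by blast
    then have "\<forall>it\<in>set c. item_sat I S w it" using w(1) by (metis fun_upd_triv)
    with w(1) show "\<exists>w. (\<forall>i. w i \<in> A) \<and> (\<forall>it\<in>set c. item_sat I S w it)" by blast
  next
    assume "\<exists>w. (\<forall>i. w i \<in> A) \<and> (\<forall>it\<in>set c. item_sat I S w it)"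
    then obtain w where "\<forall>i. w i \<in> A" "\<forall>it\<in>set c. item_sat I S w it" by blast
    with upd show "check_holds A I S u c" unfolding check_holds_def by (intro exI[of _ w]) simp
  qed
qed

text \<open>A gate lists, as checks, the ways in which the Tseitin relation (n, N) can disagree with
  the connective applied to the relations of the children.  Variable N carries the witness of an
  existential quantifier and N + 3 is the universal variable of the checks.\<close>
definition not_gate :: "nat \<Rightarrow> nat \<Rightarrow> item list list" where
  "not_gate N n =
     [[ISV True (n, N) [0..<N], ISV True (Suc n, N) [0..<N]],
      [ISV False (n, N) [0..<N], ISV False (Suc n, N) [0..<N]]]"

definition and_gate :: "nat \<Rightarrow> nat \<Rightarrow> nat \<Rightarrow> nat \<Rightarrow> item list list" where
  "and_gate N n n1 n2 =
     [[ISV True (n, N) [0..<N], ISV False (n1, N) [0..<N]],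
      [ISV True (n, N) [0..<N], ISV False (n2, N) [0..<N]],
      [ISV False (n, N) [0..<N], ISV True (n1, N) [0..<N], ISV True (n2, N) [0..<N]]]"

definition ex_gate :: "nat \<Rightarrow> nat \<Rightarrow> nat \<Rightarrow> item list list" where
  "ex_gate N n x =
     [[ISV True (n, N) [0..<N], ISV False (Suc n, N) ([0..<N][x := N + 3])],
      [ISV False (n, N) [0..<N], ISV True (Suc n, N) ([0..<N][x := N])]]"

fun is_atom :: "fo \<Rightarrow> bool" where
  "is_atom (FEq x y) = True"
| "is_atom (FRel R xs) = True"
| "is_atom (FSV X xs) = True"
| "is_atom _ = False"

fun atom_item :: "bool \<Rightarrow> fo \<Rightarrow> item" where
  "atom_item b (FEq x y) = ILit (LEq b x y)"
| "atom_item b (FRel R xs) = ILit (LRel b R xs)"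
| "atom_item b (FSV X xs) = ISV b X xs"
| "atom_item b _ = ILit (LEq b 0 0)" \<comment> \<open>junk value for non-atoms\<close>

definition atom_gate :: "nat \<Rightarrow> nat \<Rightarrow> fo \<Rightarrow> item list list" where
  "atom_gate N n p =
     [[atom_item True p, ISV False (n, N) [0..<N]], [atom_item False p, ISV True (n, N) [0..<N]]]"

lemma item_sat_atom_item:
  "is_atom p \<Longrightarrow> item_sat I S w (atom_item b p) \<longleftrightarrow> (fo_sat A I S w p \<longleftrightarrow> b)"
  by (cases p) auto

lemma item_vars_atom_item: "is_atom p \<Longrightarrow> item_vars (atom_item b p) = vars p"
  by (cases p) auto

lemma atom_gate_iff:
  assumes "is_atom p" "vars p \<subseteq> {..<N}"
  shows "checks_fail A I S (N + 3) (atom_gate N n p) \<longleftrightarrow>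
    (\<forall>w. (\<forall>i. w i \<in> A) \<longrightarrow> S (n, N) (map w [0..<N]) = fo_sat A I S w p)"
proof -
  have "N + 3 \<notin> vars p" using assms(2) by auto
  then show ?thesis
    using assms(1) by (auto simp: checks_fail_def check_holds_without_u atom_gate_def
        item_vars_atom_item item_sat_atom_item[of p I S _ _ A])
qed

lemma not_gate_iff:
  "checks_fail A I S (N + 3) (not_gate N n) \<longleftrightarrow>
    (\<forall>w. (\<forall>i. w i \<in> A) \<longrightarrow> S (n, N) (map w [0..<N]) = (\<not> S (Suc n, N) (map w [0..<N])))"
  by (auto simp: checks_fail_def check_holds_without_u not_gate_def)

lemma and_gate_iff:
  "checks_fail A I S (N + 3) (and_gate N n n1 n2) \<longleftrightarrow>
    (\<forall>w. (\<forall>i. w i \<in> A) \<longrightarrow>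
       S (n, N) (map w [0..<N]) = (S (n1, N) (map w [0..<N]) \<and> S (n2, N) (map w [0..<N])))"
  by (auto simp: checks_fail_def check_holds_without_u and_gate_def)

lemma map_upt_update:
  "x < N \<Longrightarrow> N \<le> y \<Longrightarrow> map (w(y := z)) ([0..<N][x := y]) = map (w(x := z)) [0..<N]"
  by (intro nth_equalityI) (auto simp: nth_list_update)

lemma ex_gate_iff:
  assumes "x < N"
  shows "checks_fail A I S (N + 3) (ex_gate N n x) \<longleftrightarrow>
    (\<forall>w. (\<forall>i. w i \<in> A) \<longrightarrow>
       S (n, N) (map w [0..<N]) = (\<exists>a\<in>A. S (Suc n, N) (map (w(x := a)) [0..<N])))"
proof -
  let ?T0 = "\<lambda>w. S (n, N) (map w [0..<N])" and ?T1 = "\<lambda>w. S (Suc n, N) (map w [0..<N])"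
  have c1: "check_holds A I S (N + 3) (hd (ex_gate N n x)) \<longleftrightarrow>
      (\<exists>w. (\<forall>i. w i \<in> A) \<and> ?T0 w \<and> (\<forall>a\<in>A. \<not> ?T1 (w(x := a))))"
    using assms by (auto simp: check_holds_def ex_gate_def map_upt_update)
  have upd: "map (w(N := a)) ([0..<N][x := N]) = map (w(x := a)) [0..<N]" for w a
    using assms by (rule map_upt_update) simp
  have "N + 3 \<notin> set ([0..<N][x := N])"
    using set_update_subset_insert[of "[0..<N]" x N] by auto
  then have "check_holds A I S (N + 3) (last (ex_gate N n x)) \<longleftrightarrow>
      (\<exists>w. (\<forall>i. w i \<in> A) \<and> \<not> ?T0 w \<and> S (Suc n, N) (map w ([0..<N][x := N])))"
    by (simp add: check_holds_without_u ex_gate_def)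
  also have "\<dots> \<longleftrightarrow> (\<exists>w. (\<forall>i. w i \<in> A) \<and> \<not> ?T0 w \<and> (\<exists>a\<in>A. ?T1 (w(x := a))))"
  proof
    assume "\<exists>w. (\<forall>i. w i \<in> A) \<and> \<not> ?T0 w \<and> S (Suc n, N) (map w ([0..<N][x := N]))"
    then show "\<exists>w. (\<forall>i. w i \<in> A) \<and> \<not> ?T0 w \<and> (\<exists>a\<in>A. ?T1 (w(x := a)))"
      using upd[of _ "_ N"] by (metis fun_upd_triv)
  next
    assume "\<exists>w. (\<forall>i. w i \<in> A) \<and> \<not> ?T0 w \<and> (\<exists>a\<in>A. ?T1 (w(x := a)))"
    then obtain w a where "\<forall>i. w i \<in> A" "\<not> ?T0 w" "a \<in> A" "?T1 (w(x := a))" by blast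
    then show "\<exists>w. (\<forall>i. w i \<in> A) \<and> \<not> ?T0 w \<and> S (Suc n, N) (map w ([0..<N][x := N]))"
      by (intro exI[of _ "w(N := a)"]) (simp add: upd)
  qed
  finally have c2: "check_holds A I S (N + 3) (last (ex_gate N n x)) \<longleftrightarrow>
      (\<exists>w. (\<forall>i. w i \<in> A) \<and> \<not> ?T0 w \<and> (\<exists>a\<in>A. ?T1 (w(x := a))))" .
  show ?thesis
    using c1 c2 unfolding checks_fail_def ex_gate_def by auto
qed

fun num_nodes :: "fo \<Rightarrow> nat" where
  "num_nodes (FNot p) = Suc (num_nodes p)"
| "num_nodes (FAnd p q) = Suc (num_nodes p + num_nodes q)"
| "num_nodes (FEx x p) = Suc (num_nodes p)"
| "num_nodes _ = 1"

text \<open>Subformula occurrences, numbered in preorder from n; the occurrence numbered j is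
  represented by the Tseitin variable (j, N) of arity N.\<close>
fun nodes :: "nat \<Rightarrow> fo \<Rightarrow> (nat \<times> fo) list" where
  "nodes n (FNot p) = (n, FNot p) # nodes (Suc n) p"
| "nodes n (FAnd p q) = (n, FAnd p q) # nodes (Suc n) p @ nodes (Suc n + num_nodes p) q"
| "nodes n (FEx x p) = (n, FEx x p) # nodes (Suc n) p"
| "nodes n p = [(n, p)]"

fun tseitin :: "nat \<Rightarrow> nat \<Rightarrow> fo \<Rightarrow> item list list" where
  "tseitin N n (FNot p) = not_gate N n @ tseitin N (Suc n) p"
| "tseitin N n (FAnd p q) =
     and_gate N n (Suc n) (Suc n + num_nodes p) @ tseitin N (Suc n) p @ tseitin N (Suc n + num_nodes p) q"
| "tseitin N n (FEx x p) = ex_gate N n x @ tseitin N (Suc n) p"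
| "tseitin N n p = atom_gate N n p"

definition represents :: "'a set \<Rightarrow> (rsym \<Rightarrow> 'a list \<Rightarrow> bool) \<Rightarrow> (svar \<Rightarrow> 'a list \<Rightarrow> bool)
    \<Rightarrow> nat \<Rightarrow> nat \<Rightarrow> fo \<Rightarrow> bool" where
  "represents A I S N j q \<longleftrightarrow>
     (\<forall>w. (\<forall>i. w i \<in> A) \<longrightarrow> S (j, N) (map w [0..<N]) = fo_sat A I S w q)"

definition tseitin_model :: "'a set \<Rightarrow> (rsym \<Rightarrow> 'a list \<Rightarrow> bool) \<Rightarrow> (svar \<Rightarrow> 'a list \<Rightarrow> bool)
    \<Rightarrow> nat \<Rightarrow> nat \<Rightarrow> fo \<Rightarrow> bool" where
  "tseitin_model A I S N n p \<longleftrightarrow> (\<forall>(j, q)\<in>set (nodes n p). represents A I S N j q)"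

lemma num_nodes_pos: "0 < num_nodes p"
  by (cases p) auto

lemma map_fst_nodes: "map fst (nodes n p) = [n..<n + num_nodes p]"
proof (induction n p rule: nodes.induct)
  case (2 n p q)
  then show ?case
    using upt_add_eq_append[of "Suc n" "Suc n + num_nodes p" "num_nodes q"]
    by (simp add: upt_conv_Cons add.assoc del: upt_Suc)
qed (simp_all add: upt_conv_Cons del: upt_Suc)

lemma nodes_subformula:
  "(j, q) \<in> set (nodes n p) \<Longrightarrow> vars q \<subseteq> vars p \<and> so_vars q \<subseteq> so_vars p"
  by (induction n p rule: nodes.induct) auto

lemma tseitin_model_simps:
  "tseitin_model A I S N n (FNot p) \<longleftrightarrow>
     represents A I S N n (FNot p) \<and> tseitin_model A I S N (Suc n) p"
  "tseitin_model A I S N n (FAnd p q) \<longleftrightarrow> represents A I S N n (FAnd p q)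
     \<and> tseitin_model A I S N (Suc n) p \<and> tseitin_model A I S N (Suc n + num_nodes p) q"
  "tseitin_model A I S N n (FEx x p) \<longleftrightarrow>
     represents A I S N n (FEx x p) \<and> tseitin_model A I S N (Suc n) p"
  "is_atom p \<Longrightarrow> tseitin_model A I S N n p \<longleftrightarrow> represents A I S N n p"
  unfolding tseitin_model_def by (auto simp: ball_Un elim: is_atom.elims)

lemma tseitin_model_root: "tseitin_model A I S N n p \<Longrightarrow> represents A I S N n p"
  unfolding tseitin_model_def by (cases p) auto

lemma tseitin_correct:
  assumes "or_all_free p" "vars p \<subseteq> {..<N}"
  shows "checks_fail A I S (N + 3) (tseitin N n p) \<longleftrightarrow> tseitin_model A I S N n p"
  using assms
proof (induction p arbitrary: n)
  case (FNot p)
  have "checks_fail A I S (N + 3) (not_gate N n) \<longleftrightarrow> represents A I S N n (FNot p)"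
    if "tseitin_model A I S N (Suc n) p"
    using tseitin_model_root[OF that] by (simp add: not_gate_iff represents_def)
  then show ?case using FNot by (auto simp: checks_fail_append tseitin_model_simps)
next
  case (FAnd p q)
  have "checks_fail A I S (N + 3) (and_gate N n (Suc n) (Suc n + num_nodes p))
      \<longleftrightarrow> represents A I S N n (FAnd p q)"
    if "tseitin_model A I S N (Suc n) p" "tseitin_model A I S N (Suc n + num_nodes p) q"
    using tseitin_model_root[OF that(1)] tseitin_model_root[OF that(2)]
    by (simp add: and_gate_iff represents_def)
  then show ?case using FAnd by (auto simp: checks_fail_append tseitin_model_simps)
next
  case (FEx x p)
  have "checks_fail A I S (N + 3) (ex_gate N n x) \<longleftrightarrow> represents A I S N n (FEx x p)"
    if "tseitin_model A I S N (Suc n) p"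
    using tseitin_model_root[OF that] FEx.prems(2) by (simp add: ex_gate_iff represents_def)
  then show ?case using FEx by (auto simp: checks_fail_append tseitin_model_simps)
qed (auto simp: atom_gate_iff tseitin_model_simps represents_def)

lemma tseitin_model_exists:
  fixes A :: "'a set" and S :: "svar \<Rightarrow> 'a list \<Rightarrow> bool"
  assumes "\<forall>X\<in>so_vars p. fst X < n" "vars p \<subseteq> {..<N}"
  shows "\<exists>S'. reassigns A (map (\<lambda>j. (j, N)) [n..<n + num_nodes p]) S S' \<and> tseitin_model A I S' N n p"
proof -
  define Vs where "Vs = map (\<lambda>j. (j, N)) [n..<n + num_nodes p]"
  define sub where "sub j = the (map_of (nodes n p) j)" for j
  define S' where "S' X = (if X \<in> set Vs
      then (\<lambda>ts. length ts = N \<and> set ts \<subseteq> A \<and> fo_sat A I S ((!) ts) (sub (fst X))) else S X)" for X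
  have Vs: "X \<in> set Vs \<longleftrightarrow> snd X = N \<and> n \<le> fst X \<and> fst X < n + num_nodes p" for X
    unfolding Vs_def by (cases X) auto
  have "represents A I S' N j q" if jq: "(j, q) \<in> set (nodes n p)" for j q
  proof (unfold represents_def, intro allI impI)
    fix w :: "nat \<Rightarrow> 'a" assume w: "\<forall>i. w i \<in> A"
    have j: "(j, N) \<in> set Vs"
      using map_fst_nodes[of n p] jq Vs by (metis atLeastLessThan_iff fst_conv image_eqI list.set_map set_upt snd_conv)
    have "sub j = q"
      using jq map_fst_nodes[of n p] unfolding sub_def by simp
    have q: "vars q \<subseteq> {..<N}" "\<forall>X\<in>so_vars q. fst X < n"
      using nodes_subformula[OF jq] assms by auto
    have "S' (j, N) (map w [0..<N]) = fo_sat A I S ((!) (map w [0..<N])) q"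
      using j w \<open>sub j = q\<close> unfolding S'_def by auto
    also have "\<dots> = fo_sat A I S w q"
      using q(1) fv_subset_vars[of q] by (intro fo_sat_cong_fv) auto
    also have "\<dots> = fo_sat A I S' w q"
      using q(2) Vs unfolding S'_def by (intro fo_sat_cong_so_vars) auto
    finally show "S' (j, N) (map w [0..<N]) = fo_sat A I S' w q" .
  qed
  moreover have "reassigns A Vs S S'"
    unfolding reassigns_def S'_def rel_on_def using Vs by auto
  ultimately show ?thesis unfolding Vs_def tseitin_model_def by blast
qed

definition tseitin_checks :: "nat \<Rightarrow> nat \<Rightarrow> fo \<Rightarrow> item list list" where
  "tseitin_checks N n p = [ISV True (n, N) [0..<N]] # tseitin N n (elim_or_all p)"

lemma sentence_iff_tseitin_checks:
  fixes A :: "'a set" and S :: "svar \<Rightarrow> 'a list \<Rightarrow> bool"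
  assumes "fv p = {}" "vars p \<subseteq> {..<N}" "\<forall>X\<in>so_vars p. fst X < n" "A \<noteq> {}"
  shows "fo_sat A I S v p \<longleftrightarrow>
    (\<forall>S'. reassigns A (map (\<lambda>j. (j, N)) [n..<n + num_nodes (elim_or_all p)]) S S' \<longrightarrow>
       (\<exists>c\<in>set (tseitin_checks N n p). check_holds A I S' (N + 3) c))"
    (is "_ \<longleftrightarrow> (\<forall>S'. reassigns A ?Vs S S' \<longrightarrow> _)")
proof -
  let ?t = "elim_or_all p"
  have t: "or_all_free ?t" "vars ?t \<subseteq> {..<N}" "\<forall>X\<in>so_vars ?t. fst X < n"
    using assms(2,3) by (simp_all add: or_all_free_elim_or_all vars_elim_or_all so_vars_elim_or_all)
  have val: "fo_sat A I S' w ?t = fo_sat A I S v p" if "reassigns A ?Vs S S'" for S' w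
  proof -
    have "X \<notin> set ?Vs" if "X \<in> so_vars p" for X
      using assms(3) that by fastforce
    then have "fo_sat A I S' w ?t = fo_sat A I S w p"
      using that unfolding reassigns_def fo_sat_elim_or_all by (intro fo_sat_cong_so_vars) blast
    also have "\<dots> = fo_sat A I S v p"
      using assms(1) by (intro fo_sat_cong_fv) simp
    finally show ?thesis .
  qed
  have root: "check_holds A I S' (N + 3) [ISV True (n, N) [0..<N]] \<longleftrightarrow> fo_sat A I S v p"
    if "reassigns A ?Vs S S'" "tseitin_model A I S' N n ?t" for S'
  proof -
    obtain a where "a \<in> A" using assms(4) by blast
    then show ?thesis
      using tseitin_model_root[OF that(2)] val[OF that(1)]
      by (auto simp: check_holds_without_u represents_def)
  qed
  show ?thesis
  proof (intro iffI allI impI)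
    fix S' assume "fo_sat A I S v p" and S': "reassigns A ?Vs S S'"
    show "\<exists>c\<in>set (tseitin_checks N n p). check_holds A I S' (N + 3) c"
    proof (cases "tseitin_model A I S' N n ?t")
      case True
      with root S' \<open>fo_sat A I S v p\<close> show ?thesis by (simp add: tseitin_checks_def)
    next
      case False
      then have "\<not> checks_fail A I S' (N + 3) (tseitin N n ?t)"
        using tseitin_correct[OF t(1,2)] by blast
      then show ?thesis by (auto simp: checks_fail_def tseitin_checks_def)
    qed
  next
    assume H: "\<forall>S'. reassigns A ?Vs S S' \<longrightarrow> (\<exists>c\<in>set (tseitin_checks N n p). check_holds A I S' (N + 3) c)"
    obtain S' where S': "reassigns A ?Vs S S'" "tseitin_model A I S' N n ?t"
      using tseitin_model_exists[OF t(3,2)] by blast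
    then have "checks_fail A I S' (N + 3) (tseitin N n ?t)"
      using tseitin_correct[OF t(1,2)] by blast
    then show "fo_sat A I S v p"
      using H S' root by (auto simp: checks_fail_def tseitin_checks_def)
  qed
qed

section \<open>The multiplexer\<close>

definition krom_body :: "'a set \<Rightarrow> (rsym \<Rightarrow> 'a list \<Rightarrow> bool) \<Rightarrow> (svar \<Rightarrow> 'a list \<Rightarrow> bool)
    \<Rightarrow> nat list \<Rightarrow> clause list \<Rightarrow> bool" where
  "krom_body A I S xs cs \<longleftrightarrow> (\<forall>w. (\<forall>x. x \<notin> set xs \<longrightarrow> w x = (SOME a. a \<in> A))
     \<and> (\<forall>x\<in>set xs. w x \<in> A) \<longrightarrow> (\<forall>c\<in>set cs. clause_sat A I S w c))"

lemma krom_models_KROM: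
  "krom_models A I (KROM qs xs cs) = q_sat A qs (\<lambda>S. krom_body A I S xs cs) (\<lambda>_ _. False)"
  by (simp add: krom_models_def krom_body_def)

lemma krom_body_append:
  "krom_body A I S xs (cs @ ds) \<longleftrightarrow> krom_body A I S xs cs \<and> krom_body A I S xs ds"
  by (auto simp: krom_body_def)

text \<open>The multiplexer selects a true check among cs with existential relations G_0, G_1, \<dots>
  of arity N + 3: G_0 is nonempty; a tuple of G_i whose entries N + 1 and N + 2 agree carries
  witnesses (entries 0..N) for check i, while a tuple whose entries N + 1 and N + 2 differ passes
  the obligation on to G_(i+1).  Both cases can be distinguished only in structures with at
  least two elements.\<close>
definition sel_var :: "nat \<Rightarrow> nat \<Rightarrow> nat \<Rightarrow> svar" where
  "sel_var N g0 i = (g0 + i, N + 3)"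

definition mux_start :: "nat \<Rightarrow> nat \<Rightarrow> clause" where
  "mux_start N g0 = ([LEq True (N + 1) (N + 2)], HNonempty (sel_var N g0 0), HBot)"

definition mux_item :: "nat \<Rightarrow> nat \<Rightarrow> nat \<Rightarrow> item \<Rightarrow> clause" where
  "mux_item N g0 i it = (case it of
      ILit l \<Rightarrow> ([l, LEq False (N + 1) (N + 2)], HNeg (sel_var N g0 i) [0..<N + 3], HBot)
    | ISV b X xs \<Rightarrow> ([LEq False (N + 1) (N + 2)], HNeg (sel_var N g0 i) [0..<N + 3],
        if b then HPos X xs else HNeg X xs))"

definition mux_next :: "nat \<Rightarrow> nat \<Rightarrow> nat \<Rightarrow> nat \<Rightarrow> clause" where
  "mux_next N g0 L i = ([LEq True (N + 1) (N + 2)], HNeg (sel_var N g0 i) [0..<N + 3],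
      if Suc i < L then HNonempty (sel_var N g0 (Suc i)) else HBot)"

definition mux :: "nat \<Rightarrow> nat \<Rightarrow> item list list \<Rightarrow> clause list" where
  "mux N g0 cs = mux_start N g0 # concat (map (\<lambda>i.
     map (mux_item N g0 i) (cs ! i) @ [mux_next N g0 (length cs) i]) [0..<length cs])"

lemma mux_start_sat: "clause_sat A I S w (mux_start N g0) \<longleftrightarrow>
    w (N + 1) = w (N + 2) \<or> (\<exists>ts. length ts = N + 3 \<and> set ts \<subseteq> A \<and> S (sel_var N g0 0) ts)"
  by (auto simp: clause_sat_def mux_start_def sel_var_def)

lemma mux_item_sat: "clause_sat A I S w (mux_item N g0 i it) \<longleftrightarrow>
    w (N + 1) \<noteq> w (N + 2) \<or> \<not> S (sel_var N g0 i) (map w [0..<N + 3]) \<or> item_sat I S w it"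
  by (cases it) (auto simp: clause_sat_def mux_item_def)

lemma mux_next_sat: "clause_sat A I S w (mux_next N g0 L i) \<longleftrightarrow>
    w (N + 1) = w (N + 2) \<or> \<not> S (sel_var N g0 i) (map w [0..<N + 3]) \<or>
    Suc i < L \<and> (\<exists>ts. length ts = N + 3 \<and> set ts \<subseteq> A \<and> S (sel_var N g0 (Suc i)) ts)"
  by (auto simp: clause_sat_def mux_next_def sel_var_def)

lemma set_mux: "c \<in> set (mux N g0 cs) \<longleftrightarrow> c = mux_start N g0 \<or>
    (\<exists>i<length cs. (\<exists>it\<in>set (cs ! i). c = mux_item N g0 i it) \<or> c = mux_next N g0 (length cs) i)"
  by (auto simp: mux_def)

lemma mux_sound_step:
  assumes body: "krom_body A I S [0..<N + 4] (mux N g0 cs)" and n: "n < length cs"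
    and ts: "length ts = N + 3" "set ts \<subseteq> A" "S (sel_var N g0 n) ts"
  shows "check_holds A I S (N + 3) (cs ! n)
    \<or> Suc n < length cs \<and> (\<exists>ts. length ts = N + 3 \<and> set ts \<subseteq> A \<and> S (sel_var N g0 (Suc n)) ts)"
proof -
  define d where "d = (SOME a. a \<in> A)"
  have d: "d \<in> A" using ts(1,2) unfolding d_def by (metis add_gr_0 nth_mem someI subsetD zero_less_numeral)
  define w where "w x = (if x < N + 3 then ts ! x else d)" for x
  have w: "\<forall>i. w i \<in> A" "map (w(N + 3 := z)) [0..<N + 3] = ts" for z
    using ts d unfolding w_def by (auto intro!: nth_equalityI nth_mem)
  have clause: "clause_sat A I S (w(N + 3 := z)) c" if "c \<in> set (mux N g0 cs)" "z \<in> A" for c z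
  proof -
    have "\<forall>x\<in>set [0..<N + 4]. (w(N + 3 := z)) x \<in> A" using w(1) that(2) by simp
    moreover have "\<forall>x. x \<notin> set [0..<N + 4] \<longrightarrow> (w(N + 3 := z)) x = (SOME a. a \<in> A)"
      by (simp add: w_def d_def)
    ultimately show ?thesis using body that(1) unfolding krom_body_def by blast
  qed
  have sel: "(w(N + 3 := z)) (N + 1) = ts ! (N + 1)" "(w(N + 3 := z)) (N + 2) = ts ! (N + 2)" for z
    by (simp_all add: w_def)
  show ?thesis
  proof (cases "ts ! (N + 1) = ts ! (N + 2)")
    case True
    have "item_sat I S (w(N + 3 := z)) it" if "z \<in> A" "it \<in> set (cs ! n)" for z it
      using clause[of "mux_item N g0 n it" z] that n ts(3) True
      unfolding set_mux mux_item_sat w(2) sel by blast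
    then show ?thesis unfolding check_holds_def using w(1) by blast
  next
    case False
    then show ?thesis
      using clause[of "mux_next N g0 (length cs) n" d] n ts(3) d
      unfolding set_mux mux_next_sat w(2) sel by blast
  qed
qed

lemma mux_sound:
  assumes "a \<in> A" "b \<in> A" "a \<noteq> b" "cs \<noteq> []" and body: "krom_body A I S [0..<N + 4] (mux N g0 cs)"
  shows "\<exists>c\<in>set cs. check_holds A I S (N + 3) c"
proof -
  let ?nonempty = "\<lambda>i. \<exists>ts. length ts = N + 3 \<and> set ts \<subseteq> A \<and> S (sel_var N g0 i) ts"
  have "n < length cs \<longrightarrow> ?nonempty n \<longrightarrow> (\<exists>c\<in>set cs. check_holds A I S (N + 3) c)"
    if "n \<le> length cs" for n
    using that
  proof (induction n rule: inc_induct)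
    case (step n)
    then show ?case using mux_sound_step[OF body] nth_mem by blast
  qed simp
  moreover have "?nonempty 0"
  proof -
    define w where "w x = (if x = N + 2 then b else if x < N + 4 then a else SOME a. a \<in> A)" for x
    have "clause_sat A I S w (mux_start N g0)"
      using body assms(1,2) unfolding krom_body_def by (auto simp: set_mux w_def)
    then show ?thesis using assms(3) by (simp add: mux_start_sat w_def)
  qed
  ultimately show ?thesis using assms(4) by blast
qed

text \<open>Multiplexer relations certifying check j with the witnesses w0.\<close>
definition mux_witness :: "nat \<Rightarrow> 'a \<Rightarrow> 'a \<Rightarrow> (nat \<Rightarrow> 'a) \<Rightarrow> nat \<Rightarrow> nat \<Rightarrow> 'a list \<Rightarrow> bool" where
  "mux_witness N a b w0 j i ts \<longleftrightarrow>
     i < j \<and> ts = replicate (N + 1) a @ [a, b] \<or> i = j \<and> ts = map w0 [0..<N + 1] @ [a, a]"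

lemma mux_witness_rel_on:
  "a \<in> A \<Longrightarrow> b \<in> A \<Longrightarrow> \<forall>i. w0 i \<in> A \<Longrightarrow> rel_on A (N + 3) (mux_witness N a b w0 j i)"
  by (auto simp: rel_on_def mux_witness_def)

lemma mux_witness_nonempty:
  "a \<in> A \<Longrightarrow> b \<in> A \<Longrightarrow> \<forall>i. w0 i \<in> A \<Longrightarrow> i \<le> j \<Longrightarrow>
    \<exists>ts. length ts = N + 3 \<and> set ts \<subseteq> A \<and> mux_witness N a b w0 j i ts"
  by (cases "i < j") (auto simp: mux_witness_def)

lemma mux_witness_selected:
  assumes "a \<noteq> b" "mux_witness N a b w0 j i (map w [0..<N + 3])" "w (N + 1) = w (N + 2)"
  shows "i = j" "\<forall>x\<le>N. w x = w0 x"
proof -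
  have "map w [0..<N + 3] \<noteq> replicate (N + 1) a @ [a, b]"
  proof
    assume "map w [0..<N + 3] = replicate (N + 1) a @ [a, b]"
    then have "map w [0..<N + 3] ! (N + 1) = a" "map w [0..<N + 3] ! (N + 2) = b"
      by (simp_all add: nth_append)
    with assms(1,3) show False by simp
  qed
  then have stop: "i = j" "map w [0..<N + 3] = map w0 [0..<N + 1] @ [a, a]"
    using assms(2) unfolding mux_witness_def by blast+
  show "i = j" by (fact stop(1))
  show "\<forall>x\<le>N. w x = w0 x"
  proof (intro allI impI)
    fix x assume "x \<le> N"
    then have "map w [0..<N + 3] ! x = (map w0 [0..<N + 1] @ [a, a]) ! x" using stop(2) by simp
    with \<open>x \<le> N\<close> show "w x = w0 x" by (simp add: nth_append del: upt_Suc)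
  qed
qed

lemma mux_witness_passed:
  assumes "mux_witness N a b w0 j i (map w [0..<N + 3])" "w (N + 1) \<noteq> w (N + 2)"
  shows "i < j"
proof -
  have "map w [0..<N + 3] \<noteq> map w0 [0..<N + 1] @ [a, a]"
  proof
    assume "map w [0..<N + 3] = map w0 [0..<N + 1] @ [a, a]"
    then have "map w [0..<N + 3] ! (N + 1) = a" "map w [0..<N + 3] ! (N + 2) = a"
      by (simp_all add: nth_append del: upt_Suc)
    with assms(2) show False by simp
  qed
  then show ?thesis using assms(1) unfolding mux_witness_def by blast
qed

lemma mux_complete:
  assumes ab: "a \<in> A" "b \<in> A" "a \<noteq> b" and j: "j < length cs" "check_holds A I S (N + 3) (cs ! j)"
    and items: "\<forall>c\<in>set cs. \<forall>it\<in>set c. (\<forall>X\<in>item_svars it. fst X < g0) \<and> item_vars it \<subseteq> insert (N + 3) {..N}"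
  shows "\<exists>S'. reassigns A (map (sel_var N g0) [0..<length cs]) S S' \<and> krom_body A I S' [0..<N + 4] (mux N g0 cs)"
proof -
  let ?L = "length cs" and ?Gs = "map (sel_var N g0) [0..<length cs]"
  obtain w0 where w0: "\<forall>i. w0 i \<in> A" "\<forall>z\<in>A. \<forall>it\<in>set (cs ! j). item_sat I S (w0(N + 3 := z)) it"
    using j(2) unfolding check_holds_def by blast
  define S' where "S' X = (if X \<in> set ?Gs then mux_witness N a b w0 j (fst X - g0) else S X)" for X
  have G: "S' (sel_var N g0 i) = mux_witness N a b w0 j i" if "i < ?L" for i
    using that unfolding S'_def sel_var_def by auto
  have S: "S' X = S X" if "fst X < g0" for X
    using that unfolding S'_def sel_var_def by auto
  have nonempty: "\<exists>ts. length ts = N + 3 \<and> set ts \<subseteq> A \<and> S' (sel_var N g0 i) ts" if "i \<le> j" for i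
    using that j(1) G mux_witness_nonempty[OF ab(1,2) w0(1) that] by simp
  have "clause_sat A I S' w c" if w: "\<forall>x\<in>set [0..<N + 4]. w x \<in> A" and c: "c \<in> set (mux N g0 cs)" for w c
  proof -
    consider "c = mux_start N g0" | i it where "i < ?L" "it \<in> set (cs ! i)" "c = mux_item N g0 i it"
      | i where "i < ?L" "c = mux_next N g0 ?L i"
      using c unfolding set_mux by blast
    then show ?thesis
    proof cases
      case 1
      then show ?thesis using nonempty[of 0] by (simp add: mux_start_sat)
    next
      case (2 i it)
      have "item_sat I S' w it" if sel: "w (N + 1) = w (N + 2)" "S' (sel_var N g0 i) (map w [0..<N + 3])"
      proof -
        have "mux_witness N a b w0 j i (map w [0..<N + 3])" using sel(2) G[OF 2(1)] by simp
        then have "i = j" "\<forall>x\<le>N. w x = w0 x" using mux_witness_selected[OF ab(3) _ sel(1)] by blast+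
        have "item_sat I S (w0(N + 3 := w (N + 3))) it"
          using w0(2) w \<open>i = j\<close> 2(2) by simp
        moreover have "(\<forall>X\<in>item_svars it. fst X < g0) \<and> item_vars it \<subseteq> insert (N + 3) {..N}"
          using items 2(1,2) nth_mem by blast
        then have "item_sat I S (w0(N + 3 := w (N + 3))) it = item_sat I S' w it"
          using \<open>\<forall>x\<le>N. w x = w0 x\<close> S by (intro item_sat_cong) (auto simp: subset_iff)
        ultimately show ?thesis by simp
      qed
      then show ?thesis using 2(3) mux_item_sat by blast
    next
      case (3 i)
      have "Suc i < ?L \<and> (\<exists>ts. length ts = N + 3 \<and> set ts \<subseteq> A \<and> S' (sel_var N g0 (Suc i)) ts)"
        if "w (N + 1) \<noteq> w (N + 2)" "S' (sel_var N g0 i) (map w [0..<N + 3])"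
      proof -
        have "i < j" using mux_witness_passed[of N a b w0 j i w] that G[OF 3(1)] by simp
        then show ?thesis using nonempty[of "Suc i"] j(1) by simp
      qed
      then show ?thesis unfolding 3(2) mux_next_sat by blast
    qed
  qed
  moreover have "reassigns A ?Gs S S'"
    unfolding reassigns_def
  proof
    show "\<forall>X. X \<notin> set ?Gs \<longrightarrow> S' X = S X" by (simp add: S'_def)
    show "\<forall>X\<in>set ?Gs. rel_on A (snd X) (S' X)"
      using G mux_witness_rel_on[OF ab(1,2) w0(1)] by (auto simp: sel_var_def)
  qed
  ultimately show ?thesis unfolding krom_body_def by blast
qed

lemma mux_iff:
  assumes "a \<in> A" "b \<in> A" "a \<noteq> b" "cs \<noteq> []"
    and items: "\<forall>c\<in>set cs. \<forall>it\<in>set c. (\<forall>X\<in>item_svars it. fst X < g0) \<and> item_vars it \<subseteq> insert (N + 3) {..N}"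
  shows "(\<exists>S'. reassigns A (map (sel_var N g0) [0..<length cs]) S S' \<and> krom_body A I S' [0..<N + 4] (mux N g0 cs))
    \<longleftrightarrow> (\<exists>c\<in>set cs. check_holds A I S (N + 3) c)"
proof
  assume "\<exists>S'. reassigns A (map (sel_var N g0) [0..<length cs]) S S' \<and> krom_body A I S' [0..<N + 4] (mux N g0 cs)"
  then obtain S' where S': "reassigns A (map (sel_var N g0) [0..<length cs]) S S'"
      "krom_body A I S' [0..<N + 4] (mux N g0 cs)"
    by blast
  obtain c where c: "c \<in> set cs" "check_holds A I S' (N + 3) c"
    using mux_sound[OF assms(1-4) S'(2)] by blast
  have "S' X = S X" if "it \<in> set c" "X \<in> item_svars it" for it X
  proof -
    have "fst X < g0" using items c(1) that by blast
    then have "X \<notin> set (map (sel_var N g0) [0..<length cs])" by (auto simp: sel_var_def)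
    then show ?thesis using S'(1) unfolding reassigns_def by blast
  qed
  then have "check_holds A I S (N + 3) c"
    using c(2) check_holds_cong[of c S' S] by blast
  with c(1) show "\<exists>c\<in>set cs. check_holds A I S (N + 3) c" ..
next
  assume "\<exists>c\<in>set cs. check_holds A I S (N + 3) c"
  then obtain j where "j < length cs" "check_holds A I S (N + 3) (cs ! j)"
    by (auto simp: in_set_conv_nth)
  then show "\<exists>S'. reassigns A (map (sel_var N g0) [0..<length cs]) S S' \<and> krom_body A I S' [0..<N + 4] (mux N g0 cs)"
    by (rule mux_complete[OF assms(1-3) _ _ items])
qed

section \<open>One-element structures\<close>

fun prop_val :: "(rsym \<Rightarrow> bool) \<Rightarrow> (svar \<Rightarrow> bool) \<Rightarrow> fo \<Rightarrow> bool" where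
  "prop_val \<sigma> B (FEq x y) = True"
| "prop_val \<sigma> B (FRel R xs) = \<sigma> R"
| "prop_val \<sigma> B (FSV X xs) = B X"
| "prop_val \<sigma> B (FNot p) = (\<not> prop_val \<sigma> B p)"
| "prop_val \<sigma> B (FAnd p q) = (prop_val \<sigma> B p \<and> prop_val \<sigma> B q)"
| "prop_val \<sigma> B (FOr p q) = (prop_val \<sigma> B p \<or> prop_val \<sigma> B q)"
| "prop_val \<sigma> B (FEx x p) = prop_val \<sigma> B p"
| "prop_val \<sigma> B (FAll x p) = prop_val \<sigma> B p"

fun rel_syms :: "fo \<Rightarrow> rsym list" where
  "rel_syms (FRel R xs) = [R]"
| "rel_syms (FNot p) = rel_syms p"
| "rel_syms (FAnd p q) = rel_syms p @ rel_syms q"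
| "rel_syms (FOr p q) = rel_syms p @ rel_syms q"
| "rel_syms (FEx x p) = rel_syms p"
| "rel_syms (FAll x p) = rel_syms p"
| "rel_syms _ = []"

fun prop_q_sat :: "(bool \<times> svar) list \<Rightarrow> ((svar \<Rightarrow> bool) \<Rightarrow> bool) \<Rightarrow> (svar \<Rightarrow> bool) \<Rightarrow> bool" where
  "prop_q_sat [] F B = F B"
| "prop_q_sat ((True, X) # qs) F B = (\<exists>c. prop_q_sat qs F (B(X := c)))"
| "prop_q_sat ((False, X) # qs) F B = (\<forall>c. prop_q_sat qs F (B(X := c)))"

lemma rel_syms_wf: "wf_fo \<tau> V p \<Longrightarrow> R \<in> set (rel_syms p) \<Longrightarrow> R \<in> \<tau>"
  by (induction p) auto

lemma prop_val_cong: "\<forall>R\<in>set (rel_syms p). \<sigma> R = \<sigma>' R \<Longrightarrow> prop_val \<sigma> B p = prop_val \<sigma>' B p"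
  by (induction p) auto

definition diag_val :: "'a \<Rightarrow> ('b \<times> nat \<Rightarrow> 'a list \<Rightarrow> bool) \<Rightarrow> 'b \<times> nat \<Rightarrow> bool" where
  "diag_val a S = (\<lambda>X. S X (replicate (snd X) a))"

lemma fo_sat_singleton:
  "wf_fo \<tau> V p \<Longrightarrow> fo_sat {a} I S (\<lambda>_. a) p = prop_val (diag_val a I) (diag_val a S) p"
  by (induction p) (auto simp: diag_val_def map_replicate_const fun_upd_def)

lemma diag_val_upd: "diag_val a (S(X := P)) = (diag_val a S)(X := P (replicate (snd X) a))"
  by (rule ext) (simp add: diag_val_def)

lemma ex_rel_on_singleton: "(\<exists>P. rel_on {a} n P \<and> Q (P (replicate n a))) \<longleftrightarrow> (\<exists>c. Q c)"
proof
  assume "\<exists>c. Q c"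
  then obtain c where "Q c" ..
  then show "\<exists>P. rel_on {a} n P \<and> Q (P (replicate n a))"
    by (intro exI[of _ "\<lambda>ts. ts = replicate n a \<and> c"]) (auto simp: rel_on_def)
qed blast

lemma all_rel_on_singleton: "(\<forall>P. rel_on {a} n P \<longrightarrow> Q (P (replicate n a))) \<longleftrightarrow> (\<forall>c. Q c)"
  using ex_rel_on_singleton[of a n "\<lambda>c. \<not> Q c"] by blast

lemma q_sat_singleton:
  "q_sat {a} qs (\<lambda>S. F (diag_val a S)) S = prop_q_sat qs F (diag_val a S)"
proof (induction qs arbitrary: S)
  case (Cons q qs)
  obtain b X where q: "q = (b, X)" by (cases q) auto
  let ?Q = "\<lambda>c. prop_q_sat qs F ((diag_val a S)(X := c))"
  from q show ?case
    using ex_rel_on_singleton[of a "snd X" ?Q] all_rel_on_singleton[of a "snd X" ?Q]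
    by (cases b) (simp_all only: q_sat.simps prop_q_sat.simps Cons.IH diag_val_upd)
qed simp

lemma so_models_singleton:
  assumes "wf_fo \<tau> V p"
  shows "so_models {a} I (SO qs p) = prop_q_sat qs (\<lambda>B. prop_val (diag_val a I) B p) (\<lambda>_. False)"
proof -
  have "so_models {a} I (SO qs p) = q_sat {a} qs (\<lambda>S. fo_sat {a} I S (\<lambda>_. a) p) (\<lambda>_ _. False)"
    by (simp add: so_models_def)
  also have "\<dots> = q_sat {a} qs (\<lambda>S. prop_val (diag_val a I) (diag_val a S) p) (\<lambda>_ _. False)"
    by (simp only: fo_sat_singleton[OF assms])
  also have "\<dots> = prop_q_sat qs (\<lambda>B. prop_val (diag_val a I) B p) (diag_val a (\<lambda>_ _. False))"
    by (rule q_sat_singleton)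
  finally show ?thesis by (simp add: diag_val_def)
qed

text \<open>On one-element structures a sentence depends only on which of its relation symbols hold
  of the constant tuple; such a truth pattern is a bit list indexed like the symbol list L.\<close>
definition pattern_val :: "rsym list \<Rightarrow> bool list \<Rightarrow> rsym \<Rightarrow> bool" where
  "pattern_val L bs R \<longleftrightarrow> (\<exists>j<length L. L ! j = R \<and> bs ! j)"

definition good_pattern :: "(bool \<times> svar) list \<Rightarrow> fo \<Rightarrow> bool list \<Rightarrow> bool" where
  "good_pattern qs p bs \<longleftrightarrow> prop_q_sat qs (\<lambda>B. prop_val (pattern_val (rel_syms p) bs) B p) (\<lambda>_. False)"

lemma good_pattern_singleton:
  assumes "wf_fo \<tau> V p"
  shows "good_pattern qs p (map (diag_val a I) (rel_syms p)) \<longleftrightarrow> so_models {a} I (SO qs p)"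
proof -
  have "pattern_val (rel_syms p) (map (diag_val a I) (rel_syms p)) R = diag_val a I R"
    if "R \<in> set (rel_syms p)" for R
    using that unfolding pattern_val_def by (auto simp: in_set_conv_nth)
  then have "prop_val (pattern_val (rel_syms p) (map (diag_val a I) (rel_syms p))) B p
      = prop_val (diag_val a I) B p" for B
    by (intro prop_val_cong) blast
  then show ?thesis unfolding good_pattern_def so_models_singleton[OF assms] by simp
qed

definition irrefl_clause :: "svar \<Rightarrow> clause" where
  "irrefl_clause D = ([LEq False 0 1], HNeg D [0, 1], HBot)"

text \<open>The clause is violated exactly on one-element structures with the truth pattern bs
  (the variable 0 denotes the single element there), unless D is nonempty.\<close>
definition pattern_clause :: "rsym list \<Rightarrow> svar \<Rightarrow> bool list \<Rightarrow> clause" where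
  "pattern_clause L D bs =
     (map (\<lambda>j. LRel (\<not> bs ! j) (L ! j) (replicate (snd (L ! j)) 0)) [0..<length L], HNonempty D, HBot)"

definition bad_pattern_clauses :: "(bool \<times> svar) list \<Rightarrow> fo \<Rightarrow> svar \<Rightarrow> clause list" where
  "bad_pattern_clauses qs p D = map (pattern_clause (rel_syms p) D)
     (filter (\<lambda>bs. \<not> good_pattern qs p bs) (List.n_lists (length (rel_syms p)) [True, False]))"

lemma irrefl_clause_sat: "clause_sat A I S w (irrefl_clause D) \<longleftrightarrow> w 0 \<noteq> w 1 \<or> \<not> S D [w 0, w 1]"
  by (simp add: clause_sat_def irrefl_clause_def)

lemma pattern_clause_sat:
  assumes "w 0 = a" "length bs = length L"
  shows "clause_sat A I S w (pattern_clause L D bs) \<longleftrightarrow>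
    map (diag_val a I) L \<noteq> bs \<or> hlit_sat A S w (HNonempty D)"
proof -
  have "lit_sat I w (LRel (\<not> c) R (replicate n 0)) \<longleftrightarrow> I R (replicate n a) \<noteq> c" for c R n
    using assms(1) by (cases c) auto
  then have "(\<exists>l\<in>set (fst (pattern_clause L D bs)). lit_sat I w l) \<longleftrightarrow>
      (\<exists>j<length L. diag_val a I (L ! j) \<noteq> bs ! j)"
    by (auto simp: pattern_clause_def diag_val_def)
  also have "\<dots> \<longleftrightarrow> map (diag_val a I) L \<noteq> bs"
    using assms(2) by (auto simp: list_eq_iff_nth_eq)
  finally show ?thesis by (simp add: clause_sat_def pattern_clause_def)
qed

fun wf_item :: "rsym set \<Rightarrow> svar set \<Rightarrow> nat set \<Rightarrow> item \<Rightarrow> bool" where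
  "wf_item \<tau> V W (ILit l) = wf_lit \<tau> W l"
| "wf_item \<tau> V W (ISV b X xs) = (X \<in> V \<and> length xs = snd X \<and> set xs \<subseteq> W)"

lemma wf_item_vars: "wf_item \<tau> V W it \<Longrightarrow> item_vars it \<subseteq> W \<and> item_svars it \<subseteq> V"
  by (cases it rule: item_vars.cases) auto

lemma wf_item_mono: "wf_item \<tau> V W it \<Longrightarrow> V \<subseteq> V' \<Longrightarrow> W \<subseteq> W' \<Longrightarrow> wf_item \<tau> V' W' it"
  by (cases it rule: item_vars.cases) auto

lemma wf_item_atom_item: "wf_fo \<tau> V p \<Longrightarrow> wf_item \<tau> V (insert 0 (vars p)) (atom_item b p)"
  by (cases p) auto

lemma atom_gate_wf_items:
  assumes "wf_fo \<tau> V p" "vars p \<subseteq> {..<N}" "c \<in> set (atom_gate N n p)" "it \<in> set c"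
  shows "wf_item \<tau> (insert (n, N) V) (insert (N + 3) {..N}) it"
proof -
  have W: "insert 0 (vars p) \<subseteq> insert (N + 3) {..N}" using assms(2) by auto
  have "wf_item \<tau> (insert (n, N) V) (insert (N + 3) {..N}) (atom_item b p)" for b
    by (rule wf_item_mono[OF wf_item_atom_item[OF assms(1)] _ W]) auto
  moreover have "it \<in> {atom_item True p, atom_item False p, ISV False (n, N) [0..<N], ISV True (n, N) [0..<N]}"
    using assms(3,4) by (auto simp: atom_gate_def)
  ultimately show ?thesis by auto
qed

lemma tseitin_wf_items:
  assumes "or_all_free p" "wf_fo \<tau> V p" "vars p \<subseteq> {..<N}" "c \<in> set (tseitin N n p)" "it \<in> set c"
  shows "wf_item \<tau> (V \<union> set (map (\<lambda>j. (j, N)) [n..<n + num_nodes p])) (insert (N + 3) {..N}) it"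
  using assms
proof (induction p arbitrary: n c)
  case (FNot p)
  from FNot.prems(4) consider "c \<in> set (not_gate N n)" | "c \<in> set (tseitin N (Suc n) p)" by auto
  then show ?case
  proof cases
    case 1
    with FNot.prems(5) num_nodes_pos[of p] show ?thesis by (auto simp: not_gate_def)
  next
    case 2
    have "wf_item \<tau> (V \<union> set (map (\<lambda>j. (j, N)) [Suc n..<Suc n + num_nodes p])) (insert (N + 3) {..N}) it"
      using FNot.IH[OF _ _ _ 2 FNot.prems(5)] FNot.prems(1-3) by simp
    then show ?thesis by (rule wf_item_mono) auto
  qed
next
  case (FAnd p q)
  from FAnd.prems(4) consider "c \<in> set (and_gate N n (Suc n) (Suc n + num_nodes p))"
    | "c \<in> set (tseitin N (Suc n) p)" | "c \<in> set (tseitin N (Suc n + num_nodes p) q)" by auto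
  then show ?case
  proof cases
    case 1
    with FAnd.prems(5) num_nodes_pos[of p] num_nodes_pos[of q] show ?thesis by (auto simp: and_gate_def)
  next
    case 2
    have "wf_item \<tau> (V \<union> set (map (\<lambda>j. (j, N)) [Suc n..<Suc n + num_nodes p])) (insert (N + 3) {..N}) it"
      using FAnd.IH(1)[OF _ _ _ 2 FAnd.prems(5)] FAnd.prems(1-3) by simp
    then show ?thesis by (rule wf_item_mono) auto
  next
    case 3
    have "wf_item \<tau> (V \<union> set (map (\<lambda>j. (j, N)) [(Suc n + num_nodes p)..<(Suc n + num_nodes p) + num_nodes q])) (insert (N + 3) {..N}) it"
      using FAnd.IH(2)[OF _ _ _ 3 FAnd.prems(5)] FAnd.prems(1-3) by simp
    then show ?thesis by (rule wf_item_mono) auto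
  qed
next
  case (FEx x p)
  from FEx.prems(4) consider "c \<in> set (ex_gate N n x)" | "c \<in> set (tseitin N (Suc n) p)" by auto
  then show ?case
  proof cases
    case 1
    have "set ([0..<N][x := N]) \<subseteq> insert (N + 3) {..N}"
      "set ([0..<N][x := N + 3]) \<subseteq> insert (N + 3) {..N}"
      using set_update_subset_insert[of "[0..<N]" x] by fastforce+
    with 1 FEx.prems(5) num_nodes_pos[of p] show ?thesis by (auto simp: ex_gate_def)
  next
    case 2
    have "wf_item \<tau> (V \<union> set (map (\<lambda>j. (j, N)) [Suc n..<Suc n + num_nodes p])) (insert (N + 3) {..N}) it"
      using FEx.IH[OF _ _ _ 2 FEx.prems(5)] FEx.prems(1-3) by simp
    then show ?thesis by (rule wf_item_mono) auto
  qed
qed (auto intro!: atom_gate_wf_items)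

lemma krom_body_singleton: "krom_body {a} I S xs cs \<longleftrightarrow> (\<forall>c\<in>set cs. clause_sat {a} I S (\<lambda>_. a) c)"
proof -
  have "(\<forall>x. x \<notin> set xs \<longrightarrow> w x = (SOME b. b \<in> {a})) \<and> (\<forall>x\<in>set xs. w x \<in> {a}) \<longleftrightarrow> w = (\<lambda>_. a)"
    for w :: "nat \<Rightarrow> 'a"
  proof
    assume w: "(\<forall>x. x \<notin> set xs \<longrightarrow> w x = (SOME b. b \<in> {a})) \<and> (\<forall>x\<in>set xs. w x \<in> {a})"
    show "w = (\<lambda>_. a)"
    proof
      fix x show "w x = a" using w by (cases "x \<in> set xs") auto
    qed
  qed simp
  then show ?thesis unfolding krom_body_def by simp
qed

lemma krom_body_off_diagonal:
  assumes "S D = (\<lambda>ts. ts = [a, b])" "a \<in> A" "b \<in> A" "a \<noteq> b" "snd D = 2"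
    and "\<forall>c\<in>set pcs. \<exists>L bs. c = pattern_clause L D bs"
  shows "krom_body A I S xs (irrefl_clause D # pcs)"
proof -
  have "clause_sat A I S w c" if "c \<in> set (irrefl_clause D # pcs)" for w c
  proof -
    have "hlit_sat A S w (HNonempty D)" using assms(1-3,5) by auto
    then have "clause_sat A I S w (pattern_clause L D bs)" for L bs
      by (simp add: clause_sat_def pattern_clause_def)
    moreover have "clause_sat A I S w (irrefl_clause D)"
      using assms(1,4) by (auto simp: irrefl_clause_sat)
    ultimately show ?thesis using that assms(6) by auto
  qed
  then show ?thesis unfolding krom_body_def by blast
qed

lemma selectors_two_elements:
  assumes ab: "a \<in> A" "b \<in> A" "a \<noteq> b" "cs \<noteq> []"
    and items: "\<forall>c\<in>set cs. \<forall>it\<in>set c. (\<forall>X\<in>item_svars it. fst X < g0) \<and> item_vars it \<subseteq> insert (N + 3) {..N}"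
    and D: "D = (g0 + length cs, 2)"
    and pcs: "\<forall>c\<in>set pcs. \<exists>L bs. c = pattern_clause L D bs"
  shows "(\<exists>S'. reassigns A (D # map (sel_var N g0) [0..<length cs]) S S'
      \<and> krom_body A I S' [0..<N + 4] (mux N g0 cs @ irrefl_clause D # pcs))
    \<longleftrightarrow> (\<exists>c\<in>set cs. check_holds A I S (N + 3) c)"
proof -
  let ?Gs = "map (sel_var N g0) [0..<length cs]"
  have D_Gs: "D \<notin> set ?Gs" using D by (auto simp: sel_var_def)
  have split: "reassigns A (D # ?Gs) S S' \<longleftrightarrow> rel_on A 2 (S' D) \<and> reassigns A ?Gs (S(D := S' D)) S'" for S'
    using reassigns_Cons[OF D_Gs] D by simp
  have unaffected: "(\<exists>c\<in>set cs. check_holds A I (S(D := P)) (N + 3) c) \<longleftrightarrow> (\<exists>c\<in>set cs. check_holds A I S (N + 3) c)"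
    for P
  proof -
    have "check_holds A I (S(D := P)) (N + 3) c = check_holds A I S (N + 3) c" if "c \<in> set cs" for c
    proof (rule check_holds_cong, intro ballI)
      fix it X assume "it \<in> set c" "X \<in> item_svars it"
      then have "fst X < g0" using items that by blast
      then show "(S(D := P)) X = S X" using D by auto
    qed
    then show ?thesis by blast
  qed
  show ?thesis
  proof
    assume "\<exists>S'. reassigns A (D # ?Gs) S S' \<and> krom_body A I S' [0..<N + 4] (mux N g0 cs @ irrefl_clause D # pcs)"
    then obtain S' where "reassigns A ?Gs (S(D := S' D)) S'" "krom_body A I S' [0..<N + 4] (mux N g0 cs)"
      unfolding split krom_body_append by blast
    then have "\<exists>c\<in>set cs. check_holds A I (S(D := S' D)) (N + 3) c"
      using mux_iff[OF ab items] by blast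
    then show "\<exists>c\<in>set cs. check_holds A I S (N + 3) c"
      using unaffected by blast
  next
    assume "\<exists>c\<in>set cs. check_holds A I S (N + 3) c"
    then have "\<exists>c\<in>set cs. check_holds A I (S(D := (\<lambda>ts. ts = [a, b]))) (N + 3) c"
      using unaffected by blast
    then obtain S' where S': "reassigns A ?Gs (S(D := (\<lambda>ts. ts = [a, b]))) S'"
        "krom_body A I S' [0..<N + 4] (mux N g0 cs)"
      using mux_iff[OF ab items] by blast
    then have SD: "S' D = (\<lambda>ts. ts = [a, b])"
      using D_Gs unfolding reassigns_def by (metis fun_upd_same)
    have "rel_on A 2 (S' D)" using SD ab by (simp add: rel_on_def)
    moreover have "krom_body A I S' [0..<N + 4] (irrefl_clause D # pcs)"
      using krom_body_off_diagonal[of S' D a b A, OF SD ab(1-3)] D pcs by simp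
    ultimately show "\<exists>S'. reassigns A (D # ?Gs) S S' \<and> krom_body A I S' [0..<N + 4] (mux N g0 cs @ irrefl_clause D # pcs)"
      using S' SD unfolding split krom_body_append by (intro exI[of _ S']) simp
  qed
qed

lemma two_tuple_singleton: "length ts = 2 \<Longrightarrow> set ts \<subseteq> {a} \<Longrightarrow> ts = [a, a]"
  by (cases ts rule: list.exhaust[case_product list.exhaust[of "tl ts"]]) auto

lemma selectors_singleton:
  assumes D: "D = (g0 + length cs, 2)"
  shows "(\<exists>S'. reassigns {a} (D # map (sel_var N g0) [0..<length cs]) S S'
      \<and> krom_body {a} I S' [0..<N + 4] (mux N g0 cs @ irrefl_clause D # bad_pattern_clauses qs p D))
    \<longleftrightarrow> good_pattern qs p (map (diag_val a I) (rel_syms p))"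
    (is "(\<exists>S'. reassigns {a} ?Vs S S' \<and> krom_body {a} I S' _ ?cs) \<longleftrightarrow> good_pattern qs p ?pat")
proof
  assume "\<exists>S'. reassigns {a} ?Vs S S' \<and> krom_body {a} I S' [0..<N + 4] ?cs"
  then obtain S' where S': "reassigns {a} ?Vs S S'" "\<forall>c\<in>set ?cs. clause_sat {a} I S' (\<lambda>_. a) c"
    unfolding krom_body_singleton by blast
  have "\<not> S' D [a, a]" using S'(2) by (simp add: irrefl_clause_sat)
  moreover have "rel_on {a} 2 (S' D)" using S'(1) D unfolding reassigns_def by simp
  ultimately have empty: "\<not> hlit_sat {a} S' (\<lambda>_. a) (HNonempty D)"
    using D two_tuple_singleton unfolding rel_on_def by fastforce
  show "good_pattern qs p ?pat"
  proof (rule ccontr)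
    assume "\<not> good_pattern qs p ?pat"
    then have "pattern_clause (rel_syms p) D ?pat \<in> set ?cs"
      by (auto simp: bad_pattern_clauses_def set_n_lists)
    then have "clause_sat {a} I S' (\<lambda>_. a) (pattern_clause (rel_syms p) D ?pat)"
      using S'(2) by blast
    with empty show False
      using pattern_clause_sat[of "\<lambda>_. a" a ?pat "rel_syms p" "{a}" I S' D] by auto
  qed
next
  assume good: "good_pattern qs p ?pat"
  define S' where "S' X = (if X \<in> set ?Vs then (\<lambda>_. False) else S X)" for X
  have "reassigns {a} ?Vs S S'" unfolding reassigns_def S'_def rel_on_def by simp
  moreover have "clause_sat {a} I S' (\<lambda>_. a) c" if "c \<in> set ?cs" for c
  proof -
    have sel: "\<not> S' (sel_var N g0 i) ts" if "i < length cs" for i ts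
      using that unfolding S'_def by simp
    have "\<not> hlit_sat {a} S' (\<lambda>_. a) (HNonempty D)" unfolding S'_def by simp
    moreover have "clause_sat {a} I S' (\<lambda>_. a) (pattern_clause (rel_syms p) D bs)"
      if "bs \<in> set (List.n_lists (length (rel_syms p)) [True, False])" "\<not> good_pattern qs p bs" for bs
      using that good pattern_clause_sat[of "\<lambda>_. a" a bs "rel_syms p"] by (auto simp: length_n_lists_elem)
    moreover have "clause_sat {a} I S' (\<lambda>_. a) c" if "c \<in> set (mux N g0 cs)" for c
      using that sel unfolding set_mux by (auto simp: mux_start_sat mux_item_sat mux_next_sat)
    moreover have "clause_sat {a} I S' (\<lambda>_. a) (irrefl_clause D)"
      unfolding S'_def by (simp add: irrefl_clause_sat)
    moreover from that consider "c \<in> set (mux N g0 cs)" | "c = irrefl_clause D"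
      | bs where "bs \<in> set (List.n_lists (length (rel_syms p)) [True, False])" "\<not> good_pattern qs p bs"
          "c = pattern_clause (rel_syms p) D bs"
      by (auto simp: bad_pattern_clauses_def)
    ultimately show ?thesis by cases blast+
  qed
  ultimately show "\<exists>S'. reassigns {a} ?Vs S S' \<and> krom_body {a} I S' [0..<N + 4] ?cs"
    unfolding krom_body_singleton by blast
qed

lemma tseitin_checks_items:
  assumes "wf_fo \<tau> V p" "vars p \<subseteq> {..<N}" "c \<in> set (tseitin_checks N n p)" "it \<in> set c"
  shows "wf_item \<tau> (V \<union> set (map (\<lambda>j. (j, N)) [n..<n + num_nodes (elim_or_all p)])) (insert (N + 3) {..N}) it"
proof (cases "c \<in> set (tseitin N n (elim_or_all p))")
  case True
  then show ?thesis
    using tseitin_wf_items[OF or_all_free_elim_or_all] assms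
    by (simp add: wf_fo_elim_or_all vars_elim_or_all)
next
  case False
  then show ?thesis
    using assms(3,4) num_nodes_pos[of "elim_or_all p"] by (auto simp: tseitin_checks_def)
qed

lemma wf_mux:
  assumes "cs \<noteq> []" "\<forall>c\<in>set cs. \<forall>it\<in>set c. wf_item \<tau> V (set [0..<N + 4]) it"
    "\<forall>i<length cs. sel_var N g0 i \<in> V"
  shows "\<forall>c\<in>set (mux N g0 cs). wf_clause \<tau> V (set [0..<N + 4]) c"
proof
  fix c assume "c \<in> set (mux N g0 cs)"
  then consider "c = mux_start N g0" | i it where "i < length cs" "it \<in> set (cs ! i)" "c = mux_item N g0 i it"
    | i where "i < length cs" "c = mux_next N g0 (length cs) i"
    unfolding set_mux by blast
  then show "wf_clause \<tau> V (set [0..<N + 4]) c"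
  proof cases
    case 1
    then show ?thesis using assms(1,3) by (simp add: wf_clause_def mux_start_def)
  next
    case (2 i it)
    then have "wf_item \<tau> V (set [0..<N + 4]) it" using assms(2) nth_mem by blast
    with 2 assms(3) show ?thesis
      by (cases it) (auto simp: wf_clause_def mux_item_def sel_var_def)
  next
    case (3 i)
    then show ?thesis using assms(3) by (auto simp: wf_clause_def mux_next_def sel_var_def)
  qed
qed

definition var_bound :: "fo \<Rightarrow> nat" where
  "var_bound p = Suc (Max (insert 0 (vars p)))"

definition svar_bound :: "(bool \<times> svar) list \<Rightarrow> nat" where
  "svar_bound qs = Suc (Max (insert 0 (fst ` snd ` set qs)))"

lemma vars_below_var_bound: "vars p \<subseteq> {..<var_bound p}"
  using finite_vars[of p] by (auto simp: var_bound_def le_imp_less_Suc)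

lemma svar_below_svar_bound: "X \<in> snd ` set qs \<Longrightarrow> fst X < svar_bound qs"
  by (auto simp: svar_bound_def le_imp_less_Suc)

text \<open>First-order variables: 0..<N are those of the matrix,
  N holds existential witnesses, N + 1 and N + 2 are the selector entries of the multiplexer and
  N + 3 is the universal variable of the checks.  Second-order variables: the names of qs lie
  below svar_bound qs, shadowed ones are renamed below M, the Tseitin variables are (j, N) for
  M \<le> j < m, and the multiplexer relations and D come after m.\<close>
definition krom_of :: "(bool \<times> svar) list \<Rightarrow> fo \<Rightarrow> krom" where
  "krom_of qs p = (let N = var_bound p; M = svar_bound qs + length qs; m = M + num_nodes (elim_or_all p);
     cs = tseitin_checks N M p; D = (m + length cs, 2) in
     KROM (rename_shadowed (svar_bound qs) qs @ map (Pair False) (map (\<lambda>j. (j, N)) [M..<m])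
             @ map (Pair True) (D # map (sel_var N m) [0..<length cs]))
       [0..<N + 4] (mux N m cs @ irrefl_clause D # bad_pattern_clauses qs p D))"

lemma tseitin_checks_mux_ready:
  assumes "wf_fo \<tau> V p" "vars p \<subseteq> {..<N}" "\<forall>X\<in>V. fst X < M" "m = M + num_nodes (elim_or_all p)"
  shows "\<forall>c\<in>set (tseitin_checks N M p). \<forall>it\<in>set c.
    (\<forall>X\<in>item_svars it. fst X < m) \<and> item_vars it \<subseteq> insert (N + 3) {..N}"
proof (intro ballI)
  fix c it assume "c \<in> set (tseitin_checks N M p)" "it \<in> set c"
  then have "item_vars it \<subseteq> insert (N + 3) {..N}"
      "item_svars it \<subseteq> V \<union> set (map (\<lambda>j. (j, N)) [M..<m])"
    using wf_item_vars[OF tseitin_checks_items[OF assms(1,2)]] assms(4) by blast+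
  then show "(\<forall>X\<in>item_svars it. fst X < m) \<and> item_vars it \<subseteq> insert (N + 3) {..N}"
    using assms(3,4) by fastforce
qed

lemma sentence_iff_krom_blocks:
  assumes "fv p = {}" "wf_fo \<tau> V p" "\<forall>X\<in>V. fst X < M" "vars p \<subseteq> {..<N}"
    and ab: "a \<in> A" "b \<in> A" "a \<noteq> b"
    and m: "m = M + num_nodes (elim_or_all p)" and cs: "cs = tseitin_checks N M p"
    and D: "D = (m + length cs, 2)" and pcs: "\<forall>c\<in>set pcs. \<exists>L bs. c = pattern_clause L D bs"
  shows "fo_sat A I S v p \<longleftrightarrow> (\<forall>S1. reassigns A (map (\<lambda>j. (j, N)) [M..<m]) S S1 \<longrightarrow>
    (\<exists>S2. reassigns A (D # map (sel_var N m) [0..<length cs]) S1 S2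
       \<and> krom_body A I S2 [0..<N + 4] (mux N m cs @ irrefl_clause D # pcs)))"
proof -
  have "\<forall>X\<in>so_vars p. fst X < M" using so_vars_wf[OF assms(2)] assms(3) by blast
  then have "fo_sat A I S v p \<longleftrightarrow> (\<forall>S1. reassigns A (map (\<lambda>j. (j, N)) [M..<m]) S S1 \<longrightarrow>
      (\<exists>c\<in>set cs. check_holds A I S1 (N + 3) c))"
    unfolding m cs using ab(1) by (intro sentence_iff_tseitin_checks[OF assms(1,4)]) auto
  moreover have "cs \<noteq> []" unfolding cs tseitin_checks_def by simp
  ultimately show ?thesis
    using selectors_two_elements[OF ab _ _ D pcs] tseitin_checks_mux_ready[OF assms(2,4,3) m]
    unfolding cs by simp
qed

lemma krom_models_krom_of:
  assumes f: "SO qs p \<in> SO_class b k \<tau>" and A: "is_structure \<tau> A I"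
  shows "krom_models A I (krom_of qs p) = so_models A I (SO qs p)"
proof -
  have wf: "wf_fo \<tau> (snd ` set qs) p" and fv: "fv p = {}" using f by (auto simp: SO_class_def)
  define N where "N = var_bound p"
  define M where "M = svar_bound qs + length qs"
  define m where "m = M + num_nodes (elim_or_all p)"
  define cs where "cs = tseitin_checks N M p"
  define D :: svar where "D = (m + length cs, 2)"
  define Vs where "Vs = map (\<lambda>j. (j, N)) [M..<m]"
  define Gs where "Gs = map (sel_var N m) [0..<length cs]"
  define body where "body S \<longleftrightarrow> krom_body A I S [0..<N + 4] (mux N m cs @ irrefl_clause D # bad_pattern_clauses qs p D)"
    for S
  have dVs: "distinct Vs" and dGs: "distinct (D # Gs)"
    unfolding Vs_def Gs_def D_def by (auto simp: distinct_map inj_on_def sel_var_def)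
  have blocks: "q_sat A (map (Pair False) Vs) (q_sat A (map (Pair True) (D # Gs)) body)
      = (\<lambda>S. \<forall>S1. reassigns A Vs S S1 \<longrightarrow> (\<exists>S2. reassigns A (D # Gs) S1 S2 \<and> body S2))"
    by (intro ext) (simp only: q_sat_forall_block[OF dVs] q_sat_exists_block[OF dGs])
  have models: "krom_models A I (krom_of qs p) = q_sat A (rename_shadowed (svar_bound qs) qs)
      (\<lambda>S. \<forall>S1. reassigns A Vs S S1 \<longrightarrow> (\<exists>S2. reassigns A (D # Gs) S1 S2 \<and> body S2)) (\<lambda>_ _. False)"
    unfolding krom_of_def Let_def krom_models_KROM q_sat_append
      N_def[symmetric] M_def[symmetric] m_def[symmetric] cs_def[symmetric] D_def[symmetric]
      Vs_def[symmetric] Gs_def[symmetric] body_def[symmetric, abs_def] blocks ..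
  have pcs: "\<forall>c\<in>set (bad_pattern_clauses qs p D). \<exists>L bs. c = pattern_clause L D bs"
    by (auto simp: bad_pattern_clauses_def)
  obtain a where "a \<in> A" using A by (auto simp: is_structure_def)
  show ?thesis
  proof (cases "A = {a}")
    case True
    have "(\<exists>S2. reassigns A (D # Gs) S1 S2 \<and> body S2) \<longleftrightarrow> so_models A I (SO qs p)" for S1
      unfolding True Gs_def body_def
      by (simp only: selectors_singleton[OF D_def] good_pattern_singleton[OF wf])
    then have "(\<forall>S1. reassigns A Vs S S1 \<longrightarrow> (\<exists>S2. reassigns A (D # Gs) S1 S2 \<and> body S2))
        \<longleftrightarrow> so_models A I (SO qs p)" for S
      using reassigns_exists by blast
    then show ?thesis unfolding models by (simp add: q_sat_const)
  next
    case False
    then obtain b where ab: "a \<in> A" "b \<in> A" "a \<noteq> b" using \<open>a \<in> A\<close> by blast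
    have "\<forall>X\<in>snd ` set qs. fst X < M" unfolding M_def using svar_below_svar_bound by fastforce
    then have "(\<forall>S1. reassigns A Vs S S1 \<longrightarrow> (\<exists>S2. reassigns A (D # Gs) S1 S2 \<and> body S2))
        \<longleftrightarrow> fo_sat A I S (\<lambda>_. SOME a. a \<in> A) p" for S
      using sentence_iff_krom_blocks[OF fv wf _ vars_below_var_bound[of p, folded N_def] ab m_def cs_def D_def pcs]
      unfolding Vs_def Gs_def body_def by blast
    then have "krom_models A I (krom_of qs p)
        = q_sat A (rename_shadowed (svar_bound qs) qs) (\<lambda>S. fo_sat A I S (\<lambda>_. SOME a. a \<in> A) p) (\<lambda>_ _. False)"
      unfolding models by simp
    also have "\<dots> = q_sat A qs (\<lambda>S. fo_sat A I S (\<lambda>_. SOME a. a \<in> A) p) (\<lambda>_ _. False)"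
    proof (rule q_sat_rename_shadowed[where W = "so_vars p"])
      show "\<forall>X\<in>so_vars p. fst X < svar_bound qs"
        using so_vars_wf[OF wf] svar_below_svar_bound by blast
    qed (simp_all add: fo_sat_cong_so_vars)
    also have "\<dots> = so_models A I (SO qs p)"
      by (simp add: so_models_def)
    finally show ?thesis .
  qed
qed

lemma distinct_krom_of_prefix:
  assumes "M = svar_bound qs + length qs" "M \<le> m" "\<forall>X\<in>set Vs. M \<le> fst X \<and> fst X < m"
    "\<forall>X\<in>set Gs. m \<le> fst X" "distinct Vs" "distinct Gs"
  shows "distinct (map snd (rename_shadowed (svar_bound qs) qs @ map (Pair False) Vs @ map (Pair True) Gs))"
proof -
  have "fst X < M" if "X \<in> snd ` set (rename_shadowed (svar_bound qs) qs)" for X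
    using rename_shadowed_names[OF that] svar_below_svar_bound assms(1) by fastforce
  then have "X \<notin> set Vs \<union> set Gs" if "X \<in> snd ` set (rename_shadowed (svar_bound qs) qs)" for X
    using that assms(2-4) by fastforce
  moreover have "X \<notin> set Gs" if "X \<in> set Vs" for X
    using that assms(3,4) by fastforce
  moreover have "distinct (map snd (rename_shadowed (svar_bound qs) qs))"
    using svar_below_svar_bound by (intro distinct_rename_shadowed) blast
  moreover have "map snd (rename_shadowed (svar_bound qs) qs @ map (Pair False) Vs @ map (Pair True) Gs)
      = map snd (rename_shadowed (svar_bound qs) qs) @ Vs @ Gs"
    by (simp add: comp_def)
  ultimately show ?thesis
    using assms(5,6) by (simp only: distinct_append set_append set_map) blast
qed

lemma wf_krom_of_clauses:
  assumes wf: "wf_fo \<tau> V p" and N: "vars p \<subseteq> {..<N}"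
    and m: "m = M + num_nodes (elim_or_all p)" and cs: "cs = tseitin_checks N M p"
    and V': "V \<union> set (map (\<lambda>j. (j, N)) [M..<m]) \<subseteq> V'" "D \<in> V'" "\<forall>i<length cs. sel_var N m i \<in> V'"
    and D: "snd D = 2"
  shows "\<forall>c\<in>set (mux N m cs @ irrefl_clause D # bad_pattern_clauses qs p D). wf_clause \<tau> V' (set [0..<N + 4]) c"
proof -
  have W: "insert (N + 3) {..N} \<subseteq> set [0..<N + 4]" by auto
  have "\<forall>c\<in>set cs. \<forall>it\<in>set c. wf_item \<tau> V' (set [0..<N + 4]) it"
  proof (intro ballI)
    fix c it assume "c \<in> set cs" "it \<in> set c"
    then show "wf_item \<tau> V' (set [0..<N + 4]) it"
      using V'(1) unfolding cs m by (rule wf_item_mono[OF tseitin_checks_items[OF wf N] _ W])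
  qed
  then have "\<forall>c\<in>set (mux N m cs). wf_clause \<tau> V' (set [0..<N + 4]) c"
    using V'(3) by (intro wf_mux) (auto simp: cs tseitin_checks_def)
  moreover have "wf_clause \<tau> V' (set [0..<N + 4]) (irrefl_clause D)"
    using V'(2) D by (simp add: wf_clause_def irrefl_clause_def)
  moreover have "wf_clause \<tau> V' (set [0..<N + 4]) (pattern_clause (rel_syms p) D bs)" for bs
    using V'(2) rel_syms_wf[OF wf] by (auto simp: wf_clause_def pattern_clause_def)
  ultimately show ?thesis by (auto simp: bad_pattern_clauses_def)
qed

lemma krom_of_in_KROM_class:
  assumes f: "SO qs p \<in> SO_class b k \<tau>" and last: "last (map fst qs) = False"
  shows "krom_of qs p \<in> KROM_class b (k + 1) \<tau>"
proof -
  have wf: "wf_fo \<tau> (snd ` set qs) p" and pc: "prefix_class b k qs" using f by (auto simp: SO_class_def)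
  define N where "N = var_bound p"
  define M where "M = svar_bound qs + length qs"
  define m where "m = M + num_nodes (elim_or_all p)"
  define cs where "cs = tseitin_checks N M p"
  define D :: svar where "D = (m + length cs, 2)"
  define Vs where "Vs = map (\<lambda>j. (j, N)) [M..<m]"
  define Gs where "Gs = map (sel_var N m) [0..<length cs]"
  define pre where "pre = rename_shadowed (svar_bound qs) qs @ map (Pair False) Vs @ map (Pair True) (D # Gs)"
  have krom: "krom_of qs p = KROM pre [0..<N + 4] (mux N m cs @ irrefl_clause D # bad_pattern_clauses qs p D)"
    unfolding krom_of_def Let_def pre_def Vs_def Gs_def D_def cs_def m_def M_def N_def ..
  have "qs \<noteq> []" "fst (hd qs) = b" "nblocks qs = k" using pc by (auto simp: prefix_class_def)
  moreover have "map fst pre = map fst qs @ replicate (length Vs) False @ replicate (Suc (length Gs)) True"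
    unfolding pre_def by (simp add: map_fst_rename_shadowed comp_def map_replicate_const)
  ultimately have "prefix_class b (k + 1) pre"
    using last remdups_adj_append_blocks[of "map fst qs" "Suc (length Gs)" "length Vs"]
    by (cases qs) (auto simp: prefix_class_def nblocks_def)
  moreover have "distinct (map snd pre)"
    unfolding pre_def
  proof (rule distinct_krom_of_prefix[OF M_def])
    show "M \<le> m" "\<forall>X\<in>set Vs. M \<le> fst X \<and> fst X < m" "distinct Vs"
      by (auto simp: m_def Vs_def distinct_map inj_on_def)
    show "\<forall>X\<in>set (D # Gs). m \<le> fst X" "distinct (D # Gs)"
      by (auto simp: Gs_def D_def distinct_map inj_on_def sel_var_def)
  qed
  moreover have "\<forall>c\<in>set (mux N m cs @ irrefl_clause D # bad_pattern_clauses qs p D).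
      wf_clause \<tau> (snd ` set pre) (set [0..<N + 4]) c"
  proof (rule wf_krom_of_clauses[OF wf vars_below_var_bound[of p, folded N_def] m_def cs_def])
    have names: "snd ` set pre = snd ` set (rename_shadowed (svar_bound qs) qs) \<union> set Vs \<union> insert D (set Gs)"
      unfolding pre_def by (simp add: image_Un image_image Un_assoc)
    moreover have "snd ` set qs \<subseteq> snd ` set (rename_shadowed (svar_bound qs) qs)"
      using rename_shadowed_keeps by blast
    ultimately show "snd ` set qs \<union> set (map (\<lambda>j. (j, N)) [M..<m]) \<subseteq> snd ` set pre"
      unfolding Vs_def by blast
    show "D \<in> snd ` set pre" "\<forall>i<length cs. sel_var N m i \<in> snd ` set pre"
      unfolding names by (auto simp: Gs_def)
  qed (simp add: D_def)
  ultimately show ?thesis unfolding krom KROM_class_def by blast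
qed

lemma last_quantifier_universal:
  assumes "prefix_class b k qs" "b \<and> even k \<or> \<not> b \<and> odd k"
  shows "last (map fst qs) = False"
proof -
  have "map fst qs \<noteq> []" "hd (map fst qs) = b" "length (remdups_adj (map fst qs)) = k"
    using assms(1) by (auto simp: prefix_class_def nblocks_def hd_map)
  then show ?thesis using last_by_alternations assms(2) by auto
qed

lemma SO_class_le_KROM_class:
  assumes "b \<and> even k \<or> \<not> b \<and> odd k"
  shows "class_le (SO_class b k) (KROM_class b (k + 1))"
  unfolding class_le_def
proof (intro allI ballI)
  fix \<tau> f assume f: "f \<in> SO_class b k \<tau>"
  then obtain qs p where qs: "f = SO qs p" "prefix_class b k qs" by (auto simp: SO_class_def)
  have "krom_of qs p \<in> KROM_class b (k + 1) \<tau>"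
    using f krom_of_in_KROM_class last_quantifier_universal[OF qs(2) assms] unfolding qs(1) by blast
  moreover have "equivalent \<tau> f (krom_of qs p)"
    unfolding equivalent_def
  proof (intro allI impI)
    fix A :: "nat set" and I assume "is_structure \<tau> A I"
    then show "so_models A I f = krom_models A I (krom_of qs p)"
      using krom_models_krom_of f unfolding qs(1) by metis
  qed
  ultimately show "\<exists>g\<in>KROM_class b (k + 1) \<tau>. equivalent \<tau> f g" by blast
qed

theorem proposition3p3:
  fixes k :: nat
  assumes "k \<ge> 1"
  shows "(even k \<longrightarrow> class_le (Sigma1 k) (Sigma1_KROM (k + 1)))
       \<and> (odd k \<longrightarrow> class_le (Pi1 k) (Pi1_KROM (k + 1)))"
  unfolding Sigma1_def Sigma1_KROM_def Pi1_def Pi1_KROM_def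
  using SO_class_le_KROM_class[of True k] SO_class_le_KROM_class[of False k] by simp

end
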